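(* Let $Q\subset\mathbb R^n$ be a cube and let $0<p_0<\infty$. Then $$\bigcup_{r>0}\mathcal M^r_{A_1}(Q)=\bigcup_{p>0}L^p(Q)=\bigcup_{w\in A_\infty(Q)}L^{p_0}_w(Q).$$
   Context: Cubes have sides parallel to the coordinate axes. A weight on $Q$ is a function in $L^1(Q)$ that is positive a.e. For a cube $Q$, $M_Q f(x)=\sup\{|Q'|^{-1}\int_{Q'}|f|\,dy: Q'\subset Q \text{ a cube},\ x\in Q'\}$. $A_1(Q)$ is the class of weights $w$ on $Q$ with $M_Qw\le Cw$ a.e. on $Q$ for some constant $C$. For $1<q<\infty$, $A_q(Q)$ is the class of weights $w$ on $Q$ with $\sup_{Q'\subset Q}\big(\frac{1}{|Q'|}\int_{Q'}w\big)\big(\frac{1}{|Q'|}\int_{Q'}w^{1-q'}\big)<\infty$, the supremum over cubes $Q'\subset Q$, where $1/q+1/q'=1$; $A_\infty(Q)=\bigcup_{q\ge1}A_q(Q)$. $L^{p}_w(Q)$ is the set of measurable $f$ on $Q$ with $\int_Q|f|^{p}w\,dx<\infty$. For $0<r<\infty$, $\mathcal M^r_{A_1}(Q)$ is the set of measurable functions $f$ on $Q$ for which there exists $w\in A_1(Q)$ with $|f|^r\le w$ a.e. on $Q$. *)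

theory Defs
  imports "HOL-Analysis.Analysis"
begin

definition is_cube :: "(real^'n) set \<Rightarrow> bool" where
  "is_cube Q \<longleftrightarrow> (\<exists>a l. l > 0 \<and> Q = cbox a (a + l *\<^sub>R One))"

definition avg :: "(real^'n) set \<Rightarrow> (real^'n \<Rightarrow> real) \<Rightarrow> ennreal" where
  "avg Q' f = (\<integral>\<^sup>+x\<in>Q'. ennreal \<bar>f x\<bar> \<partial>lebesgue) / emeasure lebesgue Q'"

definition maxQ :: "(real^'n) set \<Rightarrow> (real^'n \<Rightarrow> real) \<Rightarrow> real^'n \<Rightarrow> ennreal" where
  "maxQ Q f x = (SUP Q'\<in>{Q'. is_cube Q' \<and> Q' \<subseteq> Q \<and> x \<in> Q'}. avg Q' f)"

definition weight :: "(real^'n) set \<Rightarrow> (real^'n \<Rightarrow> real) \<Rightarrow> bool" where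
  "weight Q w \<longleftrightarrow> integrable (lebesgue_on Q) w \<and> (AE x in lebesgue_on Q. w x > 0)"

definition A1 :: "(real^'n) set \<Rightarrow> (real^'n \<Rightarrow> real) \<Rightarrow> bool" where
  "A1 Q w \<longleftrightarrow> weight Q w \<and>
     (\<exists>C::real. AE x in lebesgue_on Q. maxQ Q w x \<le> ennreal (C * w x))"

text \<open>A_q for 1 < q < infinity; q' is the conjugate exponent, 1 - q' = -1/(q-1).\<close>
definition Aq :: "(real^'n) set \<Rightarrow> real \<Rightarrow> (real^'n \<Rightarrow> real) \<Rightarrow> bool" where
  "Aq Q q w \<longleftrightarrow> weight Q w \<and>
     (let q' = q / (q - 1) in
      (SUP Q'\<in>{Q'. is_cube Q' \<and> Q' \<subseteq> Q}.
          avg Q' w * avg Q' (\<lambda>x. w x powr (1 - q'))) < \<infinity>)"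

definition Ainf :: "(real^'n) set \<Rightarrow> (real^'n \<Rightarrow> real) \<Rightarrow> bool" where
  "Ainf Q w \<longleftrightarrow> A1 Q w \<or> (\<exists>q>1. Aq Q q w)"

definition Lpw :: "real \<Rightarrow> (real^'n \<Rightarrow> real) \<Rightarrow> (real^'n) set \<Rightarrow> (real^'n \<Rightarrow> real) set" where
  "Lpw p w Q = {f. f \<in> borel_measurable (lebesgue_on Q) \<and>
      (\<integral>\<^sup>+x\<in>Q. ennreal (\<bar>f x\<bar> powr p * w x) \<partial>lebesgue) < \<infinity>}"

definition Lp :: "real \<Rightarrow> (real^'n) set \<Rightarrow> (real^'n \<Rightarrow> real) set" where
  "Lp p Q = Lpw p (\<lambda>_. 1) Q"

definition MA1 :: "real \<Rightarrow> (real^'n) set \<Rightarrow> (real^'n \<Rightarrow> real) set" where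
  "MA1 r Q = {f. f \<in> borel_measurable (lebesgue_on Q) \<and>
      (\<exists>w. A1 Q w \<and> (AE x in lebesgue_on Q. \<bar>f x\<bar> powr r \<le> w x))}"

end

(*
  A1 weights are integrable, so |f|^r <= w with w in A1 puts f in L^r. Conversely, for f in L^p
  the function h = |f|^(p/2) + 1 is square integrable, and since M_Q is bounded on L^2 (weak
  type (1,1) by the Vitali covering lemma, then the layer-cake formula) the Rubio de Francia
  series R h = sum_k c^k M_Q^k h converges in L^1 for small c and satisfies M_Q (R h) <= R h / c:
  it is an A1 weight dominating |f|^(p/2).

  For the weighted spaces, take such a v in A1 with v >= 1 dominating |f|^(p1/2), p1 = min p p0.
  Then w = v^(-t) lies in A_(1+t), and |f|^p0 w <= 1 once t >= 2 p0 / p1. Conversely an A1 weight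
  is bounded below on Q, and for w in A_q Young's inequality gives
  |f|^(p0/q) <= |f|^p0 w + w^(1-q'), where w^(1-q') is integrable by the A_q condition.
*)
theory Submission
  imports Defs
begin

text \<open>Keeps the simplifier from rewriting \<open>emeasure lebesgue\<close> into \<open>emeasure lborel\<close> of a
  main part, which would bypass \<open>emeasure_cube\<close>.\<close>
declare emeasure_completion [simp del]

lemma ennreal_less_divide_power_perturb:
  fixes A y :: ennreal
  assumes "l > 0" "y < A / ennreal (l ^ n)"
  obtains e where "e > 0" "y < A / ennreal ((l + e) ^ n)"
proof (cases "A = top")
  case True
  then show ?thesis using assms by (intro that[of 1]) (auto simp: ennreal_top_divide)
next
  case False
  then obtain Ar where A: "A = ennreal Ar" "Ar \<ge> 0" by (cases A) auto
  have "y \<noteq> top" using assms(2) top.not_eq_extremum by fastforce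
  then obtain yr where yr: "y = ennreal yr" "yr \<ge> 0" by (cases y) auto
  have "yr < Ar / l ^ n"
    using assms A yr by (simp add: divide_ennreal ennreal_less_iff)
  then have "yr * (l + 0) ^ n < Ar" using assms(1) by (simp add: field_simps)
  moreover have "((\<lambda>t. yr * (l + t) ^ n) \<longlongrightarrow> yr * (l + 0) ^ n) (at_right 0)"
    by (intro tendsto_intros)
  ultimately have "eventually (\<lambda>t. yr * (l + t) ^ n < Ar) (at_right 0)"
    by (auto intro: order_tendstoD)
  then have "eventually (\<lambda>t. 0 < t \<and> yr * (l + t) ^ n < Ar) (at_right (0::real))"
    by (simp add: eventually_conj_iff eventually_at_right_less)
  then obtain e where e: "0 < e" "yr * (l + e) ^ n < Ar"
    using eventually_happens'[OF trivial_limit_at_right_real] by blast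
  then have "yr < Ar / (l + e) ^ n" using assms(1) by (simp add: field_simps)
  then show ?thesis using e A yr assms(1)
    by (intro that[of e]) (simp_all add: divide_ennreal ennreal_less_iff)
qed

lemma divide_ennreal_antimono:
  fixes A :: ennreal
  assumes "0 < c'" "c' \<le> c"
  shows "A / ennreal c \<le> A / ennreal c'"
proof -
  have "inverse (ennreal c) \<le> inverse (ennreal c')"
    using assms by (simp add: inverse_ennreal frac_le ennreal_leI)
  then show ?thesis unfolding divide_ennreal_def by (rule mult_left_mono) simp
qed

lemma suminf_Suc_le_ennreal:
  fixes f :: "nat \<Rightarrow> ennreal"
  shows "(\<Sum>k. f (Suc k)) \<le> (\<Sum>k. f k)"
  unfolding suminf_eq_SUP[of "\<lambda>k. f (Suc k)"]
proof (rule SUP_least)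
  fix n
  have "(\<Sum>k<n. f (Suc k)) \<le> f 0 + (\<Sum>k<n. f (Suc k))" by (simp add: add_increasing)
  also have "\<dots> = (\<Sum>k<Suc n. f k)" by (rule sum.lessThan_Suc_shift[symmetric])
  also have "\<dots> \<le> (\<Sum>k. f k)" by (rule sum_le_suminf) (auto intro: summableI)
  finally show "(\<Sum>k<n. f (Suc k)) \<le> (\<Sum>k. f k)" .
qed

lemma ennreal_le_square_divide_add:
  fixes F a :: ennreal
  assumes "a > 0" "a \<noteq> top"
  shows "F \<le> F ^ 2 / a + a"
proof (cases "F \<le> a")
  case False
  then have "F = F * a / a" using assms by (simp add: ennreal_mult_divide_eq)
  also have "\<dots> \<le> F ^ 2 / a"
    using False by (auto simp: power2_eq_square intro!: divide_right_mono_ennreal mult_left_mono)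
  finally show ?thesis by (simp add: add_increasing2)
qed (simp add: add_increasing)

lemma emeasure_UN_countable_le:
  assumes "countable I" "\<And>i. i \<in> I \<Longrightarrow> X i \<in> sets M"
  shows "emeasure M (\<Union>i\<in>I. X i) \<le> (\<integral>\<^sup>+i. emeasure M (X i) \<partial>count_space I)"
proof -
  have "(\<Union>i\<in>I. X i) \<in> sets M" using assms by (intro sets.countable_UN'') auto
  then have "emeasure M (\<Union>i\<in>I. X i) = (\<integral>\<^sup>+x. indicator (\<Union>i\<in>I. X i) x \<partial>M)"
    by (simp add: nn_integral_indicator)
  also have "\<dots> \<le> (\<integral>\<^sup>+x. (\<integral>\<^sup>+i. indicator (X i) x \<partial>count_space I) \<partial>M)"
  proof (rule nn_integral_mono)
    fix x
    show "indicator (\<Union>i\<in>I. X i) x \<le> (\<integral>\<^sup>+i. indicator (X i) x \<partial>count_space I)"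
    proof (cases "x \<in> (\<Union>i\<in>I. X i)")
      case True
      then obtain j where "j \<in> I" "x \<in> X j" by auto
      then have "(indicator (X j) x :: ennreal) \<le> (\<integral>\<^sup>+i. indicator (X i) x \<partial>count_space I)"
        by (intro nn_integral_ge_point[where p="\<lambda>i. indicator (X i) x"])
      then show ?thesis using True \<open>x \<in> X j\<close> by simp
    qed simp
  qed
  also have "\<dots> = (\<integral>\<^sup>+i. (\<integral>\<^sup>+x. indicator (X i) x \<partial>M) \<partial>count_space I)"
    using assms by (intro nn_integral_count_space_nn_integral) auto
  also have "\<dots> = (\<integral>\<^sup>+i. emeasure M (X i) \<partial>count_space I)"
    using assms by (intro nn_integral_cong) (simp add: nn_integral_indicator)
  finally show ?thesis .
qed

lemma disjoint_family_on_pairwise_disjnt_supersets: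
  assumes "pairwise (\<lambda>i j. disjnt (B i) (B j)) C" "\<And>i. i \<in> C \<Longrightarrow> A i \<subseteq> B i"
  shows "disjoint_family_on A C"
  using assms unfolding disjoint_family_on_def pairwise_def disjnt_def by blast

lemma nn_integral_disjoint_family_le:
  assumes "countable C" "disjoint_family_on A C" "\<And>i. i \<in> C \<Longrightarrow> A i \<in> sets M"
    "\<And>i. i \<in> C \<Longrightarrow> A i \<subseteq> Q" "Q \<in> sets M" "g \<in> borel_measurable M"
  shows "(\<integral>\<^sup>+i. (\<integral>\<^sup>+x\<in>A i. g x \<partial>M) \<partial>count_space C) \<le> (\<integral>\<^sup>+x\<in>Q. g x \<partial>M)"
proof -
  have "(\<integral>\<^sup>+i. (\<integral>\<^sup>+x\<in>A i. g x \<partial>M) \<partial>count_space C)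
      = (\<integral>\<^sup>+i. emeasure (density M g) (A i) \<partial>count_space C)"
    using assms by (intro nn_integral_cong) (simp add: emeasure_density)
  also have "\<dots> = emeasure (density M g) (\<Union>i\<in>C. A i)"
    using assms by (intro emeasure_UN_countable[symmetric]) auto
  also have "\<dots> \<le> emeasure (density M g) Q"
    using assms by (intro emeasure_mono) auto
  also have "\<dots> = (\<integral>\<^sup>+x\<in>Q. g x \<partial>M)"
    using assms by (simp add: emeasure_density)
  finally show ?thesis .
qed

lemma nn_integral_le_square_divide_add:
  fixes a :: ennreal
  assumes "a > 0" "a \<noteq> top" "F \<in> borel_measurable M"
  shows "(\<integral>\<^sup>+x. F x \<partial>M) \<le> (\<integral>\<^sup>+x. (F x)^2 \<partial>M) / a + a * emeasure M (space M)"
proof -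
  have "(\<integral>\<^sup>+x. F x \<partial>M) \<le> (\<integral>\<^sup>+x. (F x)^2 / a + a \<partial>M)"
    using assms(1,2) by (intro nn_integral_mono ennreal_le_square_divide_add)
  also have "\<dots> = (\<integral>\<^sup>+x. (F x)^2 \<partial>M) / a + a * emeasure M (space M)"
    using assms by (simp add: nn_integral_add nn_integral_divide)
  finally show ?thesis .
qed

lemma One_nth [simp]: "(One::real^'n) $ i = 1"
  by (metis one_index Cart_1)

lemma sum_Basis_nth [simp]: "(\<Sum>x\<in>(Basis::(real^'n) set). x $ i) = 1"
  using One_nth[of i] by (simp add: sum_component)

lemma mem_cube_iff:
  "(x::real^'n) \<in> cbox b (b + l *\<^sub>R One) \<longleftrightarrow> (\<forall>i. b$i \<le> x$i \<and> x$i \<le> b$i + l)"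
  unfolding mem_box_cart vector_add_component vector_scaleR_component One_nth by simp

lemma emeasure_cube:
  fixes a :: "real^'n"
  assumes "l > 0"
  shows "emeasure lebesgue (cbox a (a + l *\<^sub>R One)) = ennreal (l ^ CARD('n))"
proof -
  have "emeasure lebesgue (cbox a (a + l *\<^sub>R One)) = emeasure lborel (cbox a (a + l *\<^sub>R One))"
    by (simp add: emeasure_completion)
  also have "\<dots> = ennreal (prod ((\<bullet>) (l *\<^sub>R (One::real^'n))) Basis)"
    using assms by (subst emeasure_lborel_cbox) (auto simp: inner_simps)
  also have "prod ((\<bullet>) (l *\<^sub>R (One::real^'n))) (Basis::(real^'n) set) = l ^ CARD('n)"
    by (simp add: inner_simps prod_constant sum_component)
  finally show ?thesis .
qed

lemma is_cubeE:
  assumes "is_cube Q"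
  obtains a l where "l > 0" "Q = cbox a (a + l *\<^sub>R One)"
  using assms unfolding is_cube_def by blast

lemma sets_lebesgue_cube: "is_cube Q \<Longrightarrow> Q \<in> sets lebesgue"
  by (erule is_cubeE) simp

lemma emeasure_cube_neq_0: "is_cube Q \<Longrightarrow> emeasure lebesgue Q \<noteq> 0"
  by (erule is_cubeE) (simp add: emeasure_cube)

lemma emeasure_cube_less_top: "is_cube Q \<Longrightarrow> emeasure lebesgue Q < \<infinity>"
  by (erule is_cubeE) (simp add: emeasure_cube)

lemma emeasure_lebesgue_on_cube_less_top:
  assumes "is_cube Q"
  shows "emeasure (lebesgue_on Q) (space (lebesgue_on Q)) < \<infinity>"
  using emeasure_cube_less_top[OF assms] sets_lebesgue_cube[OF assms]
  by (simp add: emeasure_restrict_space space_restrict_space)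

lemma finite_measure_lebesgue_on_cube:
  assumes "is_cube Q"
  shows "finite_measure (lebesgue_on Q)"
  using emeasure_lebesgue_on_cube_less_top[OF assms] by (intro finite_measureI) simp

lemma cube_subset_cube_iff:
  fixes a b :: "real^'n"
  assumes "l > 0"
  shows "cbox b (b + l *\<^sub>R One) \<subseteq> cbox a (a + L *\<^sub>R One) \<longleftrightarrow>
    (\<forall>i. a$i \<le> b$i \<and> b$i + l \<le> a$i + L)"
proof
  assume "cbox b (b + l *\<^sub>R One) \<subseteq> cbox a (a + L *\<^sub>R One)"
  moreover have "b \<in> cbox b (b + l *\<^sub>R One)" "b + l *\<^sub>R One \<in> cbox b (b + l *\<^sub>R One)"
    using assms by (auto simp: mem_cube_iff)
  ultimately have "b \<in> cbox a (a + L *\<^sub>R One)" "b + l *\<^sub>R One \<in> cbox a (a + L *\<^sub>R One)"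
    by auto
  then show "\<forall>i. a$i \<le> b$i \<and> b$i + l \<le> a$i + L"
    unfolding mem_cube_iff by simp
qed (auto simp: mem_cube_iff subset_iff intro: order_trans)

lemma cube_side_le:
  fixes a b :: "real^'n"
  assumes "l > 0" "cbox b (b + l *\<^sub>R One) \<subseteq> cbox a (a + L *\<^sub>R One)"
  shows "l \<le> L"
proof -
  have "a$i \<le> b$i \<and> b$i + l \<le> a$i + L" for i
    using assms cube_subset_cube_iff by blast
  from this[of undefined] show ?thesis by linarith
qed

lemma cube_subset_cball:
  fixes b :: "real^'n"
  assumes "l > 0"
  shows "cbox b (b + l *\<^sub>R One) \<subseteq> cball (b + (l/2) *\<^sub>R One) (l * CARD('n))"
proof
  fix z assume z: "z \<in> cbox b (b + l *\<^sub>R One)"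
  have "norm ((b + (l/2) *\<^sub>R One) - z) \<le> (\<Sum>i\<in>UNIV. \<bar>((b + (l/2) *\<^sub>R One) - z) $ i\<bar>)"
    by (rule norm_le_l1_cart)
  also have "\<dots> \<le> of_nat CARD('n) * l"
  proof (rule sum_bounded_above)
    fix i :: 'n
    show "\<bar>((b + (l/2) *\<^sub>R One) - z) $ i\<bar> \<le> l"
      using z assms unfolding mem_cube_iff by (auto dest: spec[of _ i])
  qed
  finally show "z \<in> cball (b + (l/2) *\<^sub>R One) (l * CARD('n))"
    by (simp add: dist_norm mult.commute)
qed

lemma emeasure_cball_le:
  fixes c :: "real^'n"
  assumes "R > 0"
  shows "emeasure lebesgue (cball c R) \<le> ennreal ((2 * R) ^ CARD('n))"
proof -
  let ?a = "c - R *\<^sub>R One"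
  have "cball c R \<subseteq> cbox ?a (?a + (2 * R) *\<^sub>R One)"
    unfolding mem_cube_iff subset_iff
  proof (intro allI impI)
    fix z i assume "z \<in> cball c R"
    then have "\<bar>z $ i - c $ i\<bar> \<le> R"
      using component_le_norm_cart[of "z - c" i] by (simp add: dist_norm norm_minus_commute)
    then show "?a $ i \<le> z $ i \<and> z $ i \<le> ?a $ i + 2 * R"
      by simp linarith
  qed
  then have "emeasure lebesgue (cball c R) \<le> emeasure lebesgue (cbox ?a (?a + (2 * R) *\<^sub>R One))"
    by (intro emeasure_mono) auto
  also have "\<dots> = ennreal ((2 * R) ^ CARD('n))"
    using assms by (intro emeasure_cube) auto
  finally show ?thesis .
qed

lemma cube_enlarge:
  fixes a b x z :: "real^'n"
  assumes "l > 0" "e > 0" "cbox b (b + l *\<^sub>R One) \<subseteq> cbox a (a + L *\<^sub>R One)"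
    "x \<in> cbox b (b + l *\<^sub>R One)" "z \<in> cbox a (a + L *\<^sub>R One)" "dist z x < e"
  obtains m b' where "l \<le> m" "m \<le> l + e"
    "cbox b (b + l *\<^sub>R One) \<subseteq> cbox b' (b' + m *\<^sub>R One)"
    "z \<in> cbox b' (b' + m *\<^sub>R One)" "cbox b' (b' + m *\<^sub>R One) \<subseteq> cbox a (a + L *\<^sub>R One)"
proof -
  define m where "m = min L (l + e)"
  define b' where "b' = (\<chi> i. max (a$i) (max (b$i + l) (z$i) - m))"
  have sub: "\<forall>i. a$i \<le> b$i \<and> b$i + l \<le> a$i + L"
    using assms(1,3) cube_subset_cube_iff by blast
  have zx: "\<bar>z$i - x$i\<bar> < e" for i
    using component_le_norm_cart[of "z - x" i] assms(6) by (simp add: dist_norm)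
  have "l \<le> L" using assms(1,3) by (rule cube_side_le)
  then have m: "l \<le> m" "m \<le> l + e" "0 < m" using assms by (auto simp: m_def)
  have "a$i \<le> b'$i \<and> b'$i + m \<le> a$i + L \<and> b'$i \<le> b$i \<and> b$i + l \<le> b'$i + m
      \<and> b'$i \<le> z$i \<and> z$i \<le> b'$i + m" for i
  proof -
    have "b'$i = max (a$i) (max (b$i + l) (z$i) - m)" by (simp add: b'_def)
    moreover have "a$i \<le> b$i" "b$i + l \<le> a$i + L" using sub by auto
    moreover have "b$i \<le> x$i" "x$i \<le> b$i + l" "a$i \<le> z$i" "z$i \<le> a$i + L"
      using assms(4,5) by (auto simp: mem_cube_iff)
    ultimately show ?thesis
      using zx[of i] assms(1,2) unfolding m_def by (smt (verit))
  qed
  note comp = this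
  have inner: "cbox b (b + l *\<^sub>R One) \<subseteq> cbox b' (b' + m *\<^sub>R One)"
    using comp by (subst cube_subset_cube_iff) (auto simp: assms(1))
  have outer: "cbox b' (b' + m *\<^sub>R One) \<subseteq> cbox a (a + L *\<^sub>R One)"
    using comp m by (subst cube_subset_cube_iff) auto
  have "z \<in> cbox b' (b' + m *\<^sub>R One)"
    using comp by (simp add: mem_cube_iff)
  then show ?thesis by (rule that[OF m(1,2) inner _ outer])
qed

section \<open>The local maximal function\<close>

text \<open>Unlike \<^const>\<open>maxQ\<close>, this version acts on \<open>ennreal\<close>-valued functions, so that it
  can be iterated.\<close>
definition maxQ_nn :: "(real^'n) set \<Rightarrow> (real^'n \<Rightarrow> ennreal) \<Rightarrow> real^'n \<Rightarrow> ennreal" where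
  "maxQ_nn Q g x = (SUP Q'\<in>{Q'. is_cube Q' \<and> Q' \<subseteq> Q \<and> x \<in> Q'}.
      (\<integral>\<^sup>+y\<in>Q'. g y \<partial>lebesgue) / emeasure lebesgue Q')"

lemma maxQ_eq_maxQ_nn: "maxQ Q f x = maxQ_nn Q (\<lambda>y. ennreal \<bar>f y\<bar>) x"
  by (simp add: maxQ_def maxQ_nn_def avg_def)

lemma maxQ_nn_upper:
  "is_cube Q' \<Longrightarrow> Q' \<subseteq> Q \<Longrightarrow> x \<in> Q' \<Longrightarrow>
    (\<integral>\<^sup>+y\<in>Q'. g y \<partial>lebesgue) / emeasure lebesgue Q' \<le> maxQ_nn Q g x"
  unfolding maxQ_nn_def by (rule SUP_upper) auto

lemma maxQ_nn_least:
  "(\<And>Q'. is_cube Q' \<Longrightarrow> Q' \<subseteq> Q \<Longrightarrow> x \<in> Q' \<Longrightarrow>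
    (\<integral>\<^sup>+y\<in>Q'. g y \<partial>lebesgue) / emeasure lebesgue Q' \<le> c) \<Longrightarrow> maxQ_nn Q g x \<le> c"
  unfolding maxQ_nn_def by (rule SUP_least) auto

lemma maxQ_nn_outside: "x \<notin> Q \<Longrightarrow> maxQ_nn Q g x = 0"
  unfolding maxQ_nn_def by (rule antisym, rule SUP_least) auto

lemma maxQ_nn_mono:
  assumes "\<And>y. y \<in> Q \<Longrightarrow> g y \<le> g' y"
  shows "maxQ_nn Q g x \<le> maxQ_nn Q g' x"
proof (rule maxQ_nn_least)
  fix Q' assume Q': "is_cube Q'" "Q' \<subseteq> Q" "x \<in> Q'"
  have "(\<integral>\<^sup>+y\<in>Q'. g y \<partial>lebesgue) \<le> (\<integral>\<^sup>+y\<in>Q'. g' y \<partial>lebesgue)"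
    using assms Q'(2) by (intro nn_integral_mono) (auto split: split_indicator)
  then have "(\<integral>\<^sup>+y\<in>Q'. g y \<partial>lebesgue) / emeasure lebesgue Q'
      \<le> (\<integral>\<^sup>+y\<in>Q'. g' y \<partial>lebesgue) / emeasure lebesgue Q'"
    by (rule divide_right_mono_ennreal)
  also have "\<dots> \<le> maxQ_nn Q g' x" by (rule maxQ_nn_upper[OF Q'])
  finally show "(\<integral>\<^sup>+y\<in>Q'. g y \<partial>lebesgue) / emeasure lebesgue Q' \<le> maxQ_nn Q g' x" .
qed

lemma maxQ_nn_const_le: "maxQ_nn Q (\<lambda>_. ennreal c) x \<le> ennreal c"
proof (rule maxQ_nn_least)
  fix Q' assume Q': "is_cube Q'"
  have "(\<integral>\<^sup>+y\<in>Q'. ennreal c \<partial>lebesgue) = ennreal c * emeasure lebesgue Q'"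
    using sets_lebesgue_cube[OF Q'] by (simp add: nn_integral_cmult_indicator)
  then show "(\<integral>\<^sup>+y\<in>Q'. ennreal c \<partial>lebesgue) / emeasure lebesgue Q' \<le> ennreal c"
    using emeasure_cube_neq_0[OF Q'] emeasure_cube_less_top[OF Q']
    by (simp add: ennreal_mult_divide_eq)
qed

lemma maxQ_nn_add_le:
  assumes [measurable]: "g \<in> borel_measurable lebesgue" "h \<in> borel_measurable lebesgue"
  shows "maxQ_nn Q (\<lambda>y. g y + h y) x \<le> maxQ_nn Q g x + maxQ_nn Q h x"
proof (rule maxQ_nn_least)
  fix Q' assume Q': "is_cube Q'" "Q' \<subseteq> Q" "x \<in> Q'"
  have [measurable]: "Q' \<in> sets lebesgue" using sets_lebesgue_cube[OF Q'(1)] .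
  have "(\<integral>\<^sup>+y\<in>Q'. g y + h y \<partial>lebesgue) / emeasure lebesgue Q' =
     (\<integral>\<^sup>+y\<in>Q'. g y \<partial>lebesgue) / emeasure lebesgue Q' + (\<integral>\<^sup>+y\<in>Q'. h y \<partial>lebesgue) / emeasure lebesgue Q'"
    by (simp add: distrib_right nn_integral_add add_divide_distrib_ennreal)
  also have "\<dots> \<le> maxQ_nn Q g x + maxQ_nn Q h x"
    by (intro add_mono maxQ_nn_upper Q')
  finally show "(\<integral>\<^sup>+y\<in>Q'. g y + h y \<partial>lebesgue) / emeasure lebesgue Q' \<le> maxQ_nn Q g x + maxQ_nn Q h x" .
qed

lemma maxQ_nn_suminf_le:
  assumes [measurable]: "\<And>k. g k \<in> borel_measurable lebesgue"
  shows "maxQ_nn Q (\<lambda>y. \<Sum>k. c k * g k y) x \<le> (\<Sum>k. c k * maxQ_nn Q (g k) x)"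
proof (rule maxQ_nn_least)
  fix Q' assume Q': "is_cube Q'" "Q' \<subseteq> Q" "x \<in> Q'"
  have [measurable]: "Q' \<in> sets lebesgue" using sets_lebesgue_cube[OF Q'(1)] .
  have "(\<integral>\<^sup>+y\<in>Q'. (\<Sum>k. c k * g k y) \<partial>lebesgue) = (\<integral>\<^sup>+y. (\<Sum>k. c k * g k y * indicator Q' y) \<partial>lebesgue)"
    by (simp add: ennreal_suminf_multc)
  also have "\<dots> = (\<Sum>k. c k * (\<integral>\<^sup>+y\<in>Q'. g k y \<partial>lebesgue))"
    by (subst nn_integral_suminf) (simp_all add: nn_integral_cmult mult.assoc)
  finally have "(\<integral>\<^sup>+y\<in>Q'. (\<Sum>k. c k * g k y) \<partial>lebesgue) / emeasure lebesgue Q'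
      = (\<Sum>k. c k * ((\<integral>\<^sup>+y\<in>Q'. g k y \<partial>lebesgue) / emeasure lebesgue Q'))"
    unfolding divide_ennreal_def by (simp add: ennreal_suminf_multc[symmetric] mult.assoc)
  also have "\<dots> \<le> (\<Sum>k. c k * maxQ_nn Q (g k) x)"
    by (intro suminf_le mult_left_mono maxQ_nn_upper Q') auto
  finally show "(\<integral>\<^sup>+y\<in>Q'. (\<Sum>k. c k * g k y) \<partial>lebesgue) / emeasure lebesgue Q' \<le> (\<Sum>k. c k * maxQ_nn Q (g k) x)" .
qed

text \<open>Lower semicontinuity: enlarging \<open>Q'\<close> slightly inside \<open>Q\<close> captures every nearby point
  and changes the average only by a factor close to one.\<close>
lemma maxQ_nn_gt_near:
  fixes Q :: "(real^'n) set"
  assumes Q: "is_cube Q" and Q': "is_cube Q'" "Q' \<subseteq> Q" "x \<in> Q'"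
    and y: "y < (\<integral>\<^sup>+z\<in>Q'. g z \<partial>lebesgue) / emeasure lebesgue Q'"
  obtains e where "e > 0" "\<And>z. z \<in> Q \<Longrightarrow> dist z x < e \<Longrightarrow> y < maxQ_nn Q g z"
proof -
  obtain a L where L: "L > 0" "Q = cbox a (a + L *\<^sub>R One)" using is_cubeE[OF Q] by blast
  obtain b l where bl: "l > 0" "Q' = cbox b (b + l *\<^sub>R One)" using is_cubeE[OF Q'(1)] by blast
  have "y < (\<integral>\<^sup>+z\<in>Q'. g z \<partial>lebesgue) / ennreal (l ^ CARD('n))"
    using y bl by (simp add: emeasure_cube)
  then obtain e where e: "e > 0" "y < (\<integral>\<^sup>+z\<in>Q'. g z \<partial>lebesgue) / ennreal ((l + e) ^ CARD('n))"
    by (rule ennreal_less_divide_power_perturb[OF bl(1)])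
  have "y < maxQ_nn Q g z" if z: "z \<in> Q" "dist z x < e" for z
  proof -
    have sub: "cbox b (b + l *\<^sub>R One) \<subseteq> cbox a (a + L *\<^sub>R One)"
      and xb: "x \<in> cbox b (b + l *\<^sub>R One)" and za: "z \<in> cbox a (a + L *\<^sub>R One)"
      using Q'(2,3) z(1) bl(2) L(2) by auto
    obtain m b' where bm: "l \<le> m" "m \<le> l + e"
        "cbox b (b + l *\<^sub>R One) \<subseteq> cbox b' (b' + m *\<^sub>R One)"
        "z \<in> cbox b' (b' + m *\<^sub>R One)" "cbox b' (b' + m *\<^sub>R One) \<subseteq> cbox a (a + L *\<^sub>R One)"
      by (rule cube_enlarge[OF bl(1) e(1) sub xb za z(2)])
    let ?Q'' = "cbox b' (b' + m *\<^sub>R One)"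
    have m: "m > 0" using bm(1) bl(1) by linarith
    have "(\<integral>\<^sup>+z\<in>Q'. g z \<partial>lebesgue) \<le> (\<integral>\<^sup>+z\<in>?Q''. g z \<partial>lebesgue)"
      using bm(3) bl(2) by (intro nn_integral_mono) (auto split: split_indicator)
    then have "(\<integral>\<^sup>+z\<in>Q'. g z \<partial>lebesgue) / ennreal ((l + e) ^ CARD('n))
        \<le> (\<integral>\<^sup>+z\<in>?Q''. g z \<partial>lebesgue) / ennreal ((l + e) ^ CARD('n))"
      by (rule divide_right_mono_ennreal)
    also have "\<dots> \<le> (\<integral>\<^sup>+z\<in>?Q''. g z \<partial>lebesgue) / ennreal (m ^ CARD('n))"
      using m bm(2) by (intro divide_ennreal_antimono power_mono) auto
    also have "\<dots> \<le> maxQ_nn Q g z"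
      using maxQ_nn_upper[OF _ _ bm(4), of Q g] bm(5) L(2) m by (auto simp: is_cube_def emeasure_cube)
    finally show ?thesis by (rule less_le_trans[OF e(2)])
  qed
  with e(1) show ?thesis by (rule that)
qed

lemma borel_measurable_maxQ_nn:
  assumes "is_cube Q"
  shows "maxQ_nn Q g \<in> borel_measurable lebesgue"
proof (rule borel_measurableI_greater)
  fix y :: ennreal
  let ?S = "{x. y < maxQ_nn Q g x}"
  have "openin (top_of_set Q) ?S"
    unfolding openin_euclidean_subtopology_iff
  proof (intro conjI ballI)
    show "?S \<subseteq> Q" using maxQ_nn_outside by fastforce
    fix x assume "x \<in> ?S"
    then obtain Q' where Q': "is_cube Q'" "Q' \<subseteq> Q" "x \<in> Q'"
        "y < (\<integral>\<^sup>+z\<in>Q'. g z \<partial>lebesgue) / emeasure lebesgue Q'"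
      unfolding maxQ_nn_def less_SUP_iff by auto
    obtain e where "e > 0" "\<And>z. z \<in> Q \<Longrightarrow> dist z x < e \<Longrightarrow> y < maxQ_nn Q g z"
      using maxQ_nn_gt_near[OF assms Q'] by blast
    then show "\<exists>e>0. \<forall>x'\<in>Q. dist x' x < e \<longrightarrow> x' \<in> ?S" by auto
  qed
  then have "?S \<in> sets lebesgue"
    by (rule lebesgue_openin) (rule sets_lebesgue_cube[OF assms])
  then show "{x \<in> space lebesgue. y < maxQ_nn Q g x} \<in> sets lebesgue" by simp
qed

section \<open>Weak type (1,1) and the \<open>L\<^sup>2\<close> bound\<close>

lemma maxQ_nn_gt_imp_heavy_cube:
  fixes Q :: "(real^'n) set"
  assumes "ennreal t < maxQ_nn Q g x"
  obtains b l where "l > 0" "cbox b (b + l *\<^sub>R One) \<subseteq> Q" "x \<in> cbox b (b + l *\<^sub>R One)"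
    "ennreal t * ennreal (l ^ CARD('n)) \<le> (\<integral>\<^sup>+y\<in>cbox b (b + l *\<^sub>R One). g y \<partial>lebesgue)"
proof -
  obtain Q' where Q': "is_cube Q'" "Q' \<subseteq> Q" "x \<in> Q'"
      and lt: "ennreal t < (\<integral>\<^sup>+z\<in>Q'. g z \<partial>lebesgue) / emeasure lebesgue Q'"
    using assms unfolding maxQ_nn_def less_SUP_iff by auto
  have "ennreal t * emeasure lebesgue Q' \<le> (\<integral>\<^sup>+z\<in>Q'. g z \<partial>lebesgue)"
  proof (rule ccontr)
    assume "\<not> ?thesis"
    then have "(\<integral>\<^sup>+z\<in>Q'. g z \<partial>lebesgue) \<le> emeasure lebesgue Q' * ennreal t"
      by (simp add: mult.commute)
    then have "(\<integral>\<^sup>+z\<in>Q'. g z \<partial>lebesgue) / emeasure lebesgue Q' \<le> ennreal t"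
      using emeasure_cube_neq_0[OF Q'(1)] emeasure_cube_less_top[OF Q'(1)]
      by (intro divide_le_posI_ennreal) (auto simp: zero_less_iff_neq_zero)
    then show False using lt by simp
  qed
  moreover obtain b l where "l > 0" "Q' = cbox b (b + l *\<^sub>R One)" using is_cubeE[OF Q'(1)] by blast
  ultimately show ?thesis using Q' by (intro that[of l b]) (auto simp: emeasure_cube)
qed

lemma emeasure_cball_le_heavy_cube:
  fixes b c :: "real^'n"
  assumes "l > 0" "t > 0"
    and heavy: "ennreal t * ennreal (l ^ CARD('n)) \<le> (\<integral>\<^sup>+x\<in>cbox b (b + l *\<^sub>R One). g x \<partial>lebesgue)"
  shows "emeasure lebesgue (cball c (5 * (l * CARD('n))))
    \<le> ennreal ((10 * real CARD('n)) ^ CARD('n) / t) * (\<integral>\<^sup>+x\<in>cbox b (b + l *\<^sub>R One). g x \<partial>lebesgue)"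
proof -
  let ?K = "(10 * real CARD('n)) ^ CARD('n) / t"
  have "emeasure lebesgue (cball c (5 * (l * CARD('n)))) \<le> ennreal ((2 * (5 * (l * CARD('n)))) ^ CARD('n))"
    using assms by (intro emeasure_cball_le) auto
  also have "(2 * (5 * (l * CARD('n)))) ^ CARD('n) = ?K * (t * l ^ CARD('n))"
    using assms by (simp add: power_mult_distrib field_simps)
  also have "ennreal \<dots> = ennreal ?K * ennreal (t * l ^ CARD('n))"
    using assms by (intro ennreal_mult) auto
  also have "\<dots> = ennreal ?K * (ennreal t * ennreal (l ^ CARD('n)))"
    using assms by (simp add: ennreal_mult)
  also have "\<dots> \<le> ennreal ?K * (\<integral>\<^sup>+x\<in>cbox b (b + l *\<^sub>R One). g x \<partial>lebesgue)"
    by (intro mult_left_mono heavy) simp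
  finally show ?thesis .
qed

text \<open>Weak type (1,1) of the maximal function, by the Vitali covering lemma applied to the
  balls circumscribing the cubes on which the average of \<open>g\<close> exceeds \<open>t\<close>.\<close>
lemma emeasure_maxQ_nn_gt_le:
  fixes Q :: "(real^'n) set"
  assumes Q: "is_cube Q" and g[measurable]: "g \<in> borel_measurable lebesgue" and t: "t > 0"
  shows "emeasure lebesgue {x. ennreal t < maxQ_nn Q g x}
     \<le> ennreal ((10 * real CARD('n)) ^ CARD('n) / t) * (\<integral>\<^sup>+x\<in>Q. g x \<partial>lebesgue)"
proof -
  let ?K = "(10 * real CARD('n)) ^ CARD('n) / t"
  obtain a L where L: "L > 0" "Q = cbox a (a + L *\<^sub>R One)" using is_cubeE[OF Q] by blast
  define cube where "cube k = cbox (fst k) (fst k + snd k *\<^sub>R One)" for k :: "(real^'n) \<times> real"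
  define ctr where "ctr k = fst k + (snd k / 2) *\<^sub>R One" for k :: "(real^'n) \<times> real"
  define rad where "rad k = snd k * CARD('n)" for k :: "(real^'n) \<times> real"
  define K where "K = {k. snd k > 0 \<and> cube k \<subseteq> Q \<and>
      ennreal t * ennreal (snd k ^ CARD('n)) \<le> (\<integral>\<^sup>+x\<in>cube k. g x \<partial>lebesgue)}"
  have cube_cball: "cube k \<subseteq> cball (ctr k) (rad k)" if "k \<in> K" for k
    using that cube_subset_cball[of "snd k" "fst k"] by (simp add: K_def cube_def ctr_def rad_def)
  let ?S = "{x. ennreal t < maxQ_nn Q g x}"
  have S: "?S \<subseteq> (\<Union>k\<in>K. cball (ctr k) (rad k))"
  proof
    fix x assume "x \<in> ?S"
    then obtain b l where "l > 0" "cbox b (b + l *\<^sub>R One) \<subseteq> Q" "x \<in> cbox b (b + l *\<^sub>R One)"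
        "ennreal t * ennreal (l ^ CARD('n)) \<le> (\<integral>\<^sup>+y\<in>cbox b (b + l *\<^sub>R One). g y \<partial>lebesgue)"
      using maxQ_nn_gt_imp_heavy_cube by blast
    then have "(b, l) \<in> K" "x \<in> cube (b, l)" by (auto simp: K_def cube_def)
    then show "x \<in> (\<Union>k\<in>K. cball (ctr k) (rad k))" using cube_cball by blast
  qed
  have rad: "0 < rad k \<and> rad k \<le> L * CARD('n)" if "k \<in> K" for k
    using that cube_side_le[of "snd k" "fst k" a L] L by (auto simp: K_def cube_def rad_def)
  obtain C where C: "countable C" "C \<subseteq> K"
     "pairwise (\<lambda>i j. disjnt (cball (ctr i) (rad i)) (cball (ctr j) (rad j))) C"
     "?S \<subseteq> (\<Union>i\<in>C. cball (ctr i) (5 * rad i))"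
    using Vitali_covering_lemma_cballs[OF S rad] by blast
  have "disjoint_family_on cube C"
    using C(2,3) cube_cball by (intro disjoint_family_on_pairwise_disjnt_supersets) auto
  then have sum_cubes: "(\<integral>\<^sup>+i. (\<integral>\<^sup>+x\<in>cube i. g x \<partial>lebesgue) \<partial>count_space C) \<le> (\<integral>\<^sup>+x\<in>Q. g x \<partial>lebesgue)"
    using C(1,2) sets_lebesgue_cube[OF Q] by (intro nn_integral_disjoint_family_le)
      (auto simp: K_def, simp add: cube_def)
  have "emeasure lebesgue ?S \<le> emeasure lebesgue (\<Union>i\<in>C. cball (ctr i) (5 * rad i))"
    using C by (intro emeasure_mono sets.countable_UN'') auto
  also have "\<dots> \<le> (\<integral>\<^sup>+i. emeasure lebesgue (cball (ctr i) (5 * rad i)) \<partial>count_space C)"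
    using C by (intro emeasure_UN_countable_le) auto
  also have "\<dots> \<le> (\<integral>\<^sup>+i. ennreal ?K * (\<integral>\<^sup>+x\<in>cube i. g x \<partial>lebesgue) \<partial>count_space C)"
    using C(2) t unfolding rad_def cube_def
    by (intro nn_integral_mono emeasure_cball_le_heavy_cube) (auto simp: K_def cube_def)
  also have "\<dots> = ennreal ?K * (\<integral>\<^sup>+i. (\<integral>\<^sup>+x\<in>cube i. g x \<partial>lebesgue) \<partial>count_space C)"
    by (rule nn_integral_cmult) simp
  also have "\<dots> \<le> ennreal ?K * (\<integral>\<^sup>+x\<in>Q. g x \<partial>lebesgue)"
    by (intro mult_left_mono sum_cubes) simp
  finally show ?thesis .
qed

lemma nn_integral_layers_eq_square:
  assumes "r \<ge> 0"
  shows "(\<integral>\<^sup>+s. (if 0 < s \<and> 2 * s \<le> r then ennreal (8 * s) else 0) \<partial>lborel) = ennreal (r ^ 2)"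
proof -
  have "(\<integral>\<^sup>+s. (if 0 < s \<and> 2 * s \<le> r then ennreal (8 * s) else 0) \<partial>lborel)
      = (\<integral>\<^sup>+s\<in>{0..r/2}. ennreal (8 * s) \<partial>lborel)"
    by (intro nn_integral_cong) (auto split: split_indicator)
  also have "\<dots> = ennreal ((\<lambda>s. 4 * s^2) (r/2) - (\<lambda>s. 4 * s^2) 0)"
    using assms by (intro nn_integral_FTC_Icc) (auto intro!: derivative_eq_intros)
  also have "(\<lambda>s. 4 * s^2) (r/2) - (\<lambda>s. 4 * s^2) 0 = r^2" by (simp add: power2_eq_square)
  finally show ?thesis .
qed

lemma square_le_nn_integral_layers:
  fixes a :: ennreal
  shows "a ^ 2 \<le> (\<integral>\<^sup>+s. (if 0 < s \<and> ennreal (2 * s) \<le> a then ennreal (8 * s) else 0) \<partial>lborel)"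
proof (cases a)
  case (real r)
  then have "(\<integral>\<^sup>+s. (if 0 < s \<and> ennreal (2 * s) \<le> a then ennreal (8 * s) else 0) \<partial>lborel)
      = (\<integral>\<^sup>+s. (if 0 < s \<and> 2 * s \<le> r then ennreal (8 * s) else 0) \<partial>lborel)"
    by (intro nn_integral_cong) (auto simp: ennreal_le_iff)
  also have "\<dots> = ennreal (r ^ 2)" using real by (intro nn_integral_layers_eq_square) auto
  finally show ?thesis using real by (simp add: ennreal_power)
next
  case top
  let ?X = "(\<integral>\<^sup>+s. (if 0 < s \<and> ennreal (2 * s) \<le> a then ennreal (8 * s) else 0) \<partial>lborel)"
  have ge: "ennreal (r ^ 2) \<le> ?X" if "r \<ge> 0" for r
  proof -
    have "ennreal (r ^ 2) = (\<integral>\<^sup>+s. (if 0 < s \<and> 2 * s \<le> r then ennreal (8 * s) else 0) \<partial>lborel)"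
      using nn_integral_layers_eq_square[OF that] by simp
    also have "\<dots> \<le> ?X" using top by (intro nn_integral_mono) auto
    finally show ?thesis .
  qed
  have "?X = top"
  proof (rule ccontr)
    assume "?X \<noteq> top"
    then obtain x where x: "?X = ennreal x" "x \<ge> 0" by (cases ?X) auto
    then have "(x + 1) ^ 2 \<le> x" using ge[of "x + 1"] by (simp add: ennreal_le_iff)
    moreover have "(x + 1) ^ 2 = x * x + 2 * x + 1" by (simp add: power2_eq_square algebra_simps)
    moreover have "0 \<le> x * x" using x by simp
    ultimately show False using x by linarith
  qed
  then show ?thesis using top by simp
qed

text \<open>Splitting \<open>g\<close> at height \<open>s/2\<close>: the part below contributes at most \<open>s/2\<close> to the
  maximal function.\<close>
lemma maxQ_nn_level_subset:
  assumes g[measurable]: "g \<in> borel_measurable lebesgue" and s: "s > 0"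
    and x: "ennreal (2 * s) \<le> maxQ_nn Q g x"
  shows "ennreal (s / 2) < maxQ_nn Q (\<lambda>y. if ennreal (s / 2) < g y then g y else 0) x"
proof (rule ccontr)
  let ?g1 = "\<lambda>y. if ennreal (s / 2) < g y then g y else 0"
  assume "\<not> ennreal (s / 2) < maxQ_nn Q ?g1 x"
  then have le: "maxQ_nn Q ?g1 x \<le> ennreal (s / 2)" by simp
  have "maxQ_nn Q g x \<le> maxQ_nn Q (\<lambda>y. ?g1 y + ennreal (s / 2)) x"
    by (rule maxQ_nn_mono) (auto simp: not_less)
  also have "\<dots> \<le> maxQ_nn Q ?g1 x + maxQ_nn Q (\<lambda>_. ennreal (s / 2)) x"
    by (rule maxQ_nn_add_le) auto
  also have "\<dots> \<le> ennreal (s / 2) + ennreal (s / 2)"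
    by (intro add_mono le maxQ_nn_const_le)
  also have "\<dots> = ennreal s" using s by (simp flip: ennreal_plus)
  finally have "ennreal (2 * s) \<le> ennreal s" using x by simp
  then show False using s by (simp add: ennreal_le_iff)
qed

lemma nn_integral_maxQ_nn_level_le:
  fixes Q :: "(real^'n) set"
  assumes Q: "is_cube Q" and g[measurable]: "g \<in> borel_measurable lebesgue" and s: "s > 0"
  shows "(\<integral>\<^sup>+x. (if ennreal (2 * s) \<le> maxQ_nn Q g x then ennreal (8 * s) else 0) \<partial>lebesgue_on Q)
    \<le> (\<integral>\<^sup>+x. ennreal (16 * (10 * real CARD('n)) ^ CARD('n)) *
          (if ennreal (s / 2) < g x then g x else 0) \<partial>lebesgue_on Q)"
proof -
  let ?K = "(10 * real CARD('n)) ^ CARD('n)"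
  define g1 where "g1 = (\<lambda>y. if ennreal (s / 2) < g y then g y else 0)"
  have g1[measurable]: "g1 \<in> borel_measurable lebesgue" unfolding g1_def by measurable
  have [measurable]: "Q \<in> sets lebesgue" "maxQ_nn Q g \<in> borel_measurable lebesgue"
    using sets_lebesgue_cube[OF Q] borel_measurable_maxQ_nn[OF Q] by auto
  have "maxQ_nn Q g1 \<in> borel_measurable lebesgue" by (rule borel_measurable_maxQ_nn[OF Q])
  then have "{x \<in> space lebesgue. ennreal (s / 2) < maxQ_nn Q g1 x} \<in> sets lebesgue"
    by measurable
  then have "emeasure lebesgue {x \<in> Q. ennreal (2 * s) \<le> maxQ_nn Q g x}
      \<le> emeasure lebesgue {x. ennreal (s / 2) < maxQ_nn Q g1 x}"
    using maxQ_nn_level_subset[OF g s] by (intro emeasure_mono) (auto simp: g1_def)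
  also have "\<dots> \<le> ennreal (?K / (s / 2)) * (\<integral>\<^sup>+x\<in>Q. g1 x \<partial>lebesgue)"
    using s by (intro emeasure_maxQ_nn_gt_le[OF Q g1]) simp
  finally have "ennreal (8 * s) * emeasure lebesgue {x \<in> Q. ennreal (2 * s) \<le> maxQ_nn Q g x}
      \<le> ennreal (8 * s) * ennreal (?K / (s / 2)) * (\<integral>\<^sup>+x\<in>Q. g1 x \<partial>lebesgue)"
    by (simp add: mult_left_mono mult.assoc)
  also have "ennreal (8 * s) * ennreal (?K / (s / 2)) = ennreal (16 * ?K)"
    using s by (simp add: ennreal_mult[symmetric] field_simps)
  finally have bound: "ennreal (8 * s) * emeasure lebesgue {x \<in> Q. ennreal (2 * s) \<le> maxQ_nn Q g x}
      \<le> ennreal (16 * ?K) * (\<integral>\<^sup>+x\<in>Q. g1 x \<partial>lebesgue)" .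
  have "(\<integral>\<^sup>+x. (if ennreal (2 * s) \<le> maxQ_nn Q g x then ennreal (8 * s) else 0) \<partial>lebesgue_on Q)
      = (\<integral>\<^sup>+x. ennreal (8 * s) * indicator {x \<in> Q. ennreal (2 * s) \<le> maxQ_nn Q g x} x \<partial>lebesgue)"
    by (simp add: nn_integral_restrict_space) (auto intro!: nn_integral_cong split: split_indicator)
  also have "\<dots> = ennreal (8 * s) * emeasure lebesgue {x \<in> Q. ennreal (2 * s) \<le> maxQ_nn Q g x}"
    by (intro nn_integral_cmult_indicator) measurable
  also have "\<dots> \<le> ennreal (16 * ?K) * (\<integral>\<^sup>+x\<in>Q. g1 x \<partial>lebesgue)" by (rule bound)
  also have "\<dots> = (\<integral>\<^sup>+x. ennreal (16 * ?K) * g1 x \<partial>lebesgue_on Q)"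
    by (simp add: nn_integral_cmult nn_integral_restrict_space measurable_restrict_space1)
  finally show ?thesis by (simp add: g1_def)
qed

lemma nn_integral_truncation_le:
  fixes a c :: ennreal
  shows "(\<integral>\<^sup>+s. (if 0 < s then c * (if ennreal (s / 2) < a then a else 0) else 0) \<partial>lborel)
    \<le> 2 * c * a ^ 2"
proof -
  have "(\<integral>\<^sup>+s. (if 0 < s then c * (if ennreal (s / 2) < a then a else 0) else 0) \<partial>lborel)
      = (\<integral>\<^sup>+s. (c * a) * indicator {s. 0 < s \<and> ennreal (s / 2) < a} s \<partial>lborel)"
    by (intro nn_integral_cong) (auto split: split_indicator)
  also have "\<dots> = (c * a) * emeasure lborel {s. 0 < s \<and> ennreal (s / 2) < a}"
    by (intro nn_integral_cmult_indicator) measurable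
  also have "emeasure lborel {s. 0 < s \<and> ennreal (s / 2) < a} \<le> 2 * a"
  proof (cases a)
    case (real r)
    then have "{s. 0 < s \<and> ennreal (s / 2) < a} = {0<..<2 * r}"
      by (auto simp: ennreal_less_iff)
    then show ?thesis using real by (simp add: ennreal_mult)
  qed simp
  then have "(c * a) * emeasure lborel {s. 0 < s \<and> ennreal (s / 2) < a} \<le> (c * a) * (2 * a)"
    by (rule mult_left_mono) simp
  finally show ?thesis by (simp add: power2_eq_square mult_ac)
qed

lemma nn_integral_maxQ_nn_square_le:
  fixes Q :: "(real^'n) set"
  assumes Q: "is_cube Q" and g[measurable]: "g \<in> borel_measurable lebesgue"
  shows "(\<integral>\<^sup>+x\<in>Q. (maxQ_nn Q g x)^2 \<partial>lebesgue)
     \<le> ennreal (32 * (10 * real CARD('n)) ^ CARD('n)) * (\<integral>\<^sup>+x\<in>Q. (g x)^2 \<partial>lebesgue)"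
proof -
  let ?K = "(10 * real CARD('n)) ^ CARD('n)"
  let ?M = "lebesgue_on Q"
  have [measurable]: "Q \<in> sets lebesgue" using sets_lebesgue_cube[OF Q] .
  interpret M: finite_measure ?M using finite_measure_lebesgue_on_cube[OF Q] .
  interpret P: pair_sigma_finite ?M lborel
    by (simp add: pair_sigma_finite_def M.sigma_finite_measure_axioms lborel.sigma_finite_measure_axioms)
  have [measurable]: "maxQ_nn Q g \<in> borel_measurable ?M" "g \<in> borel_measurable ?M"
    using borel_measurable_maxQ_nn[OF Q] g by (auto intro: measurable_restrict_space1)
  have "(\<integral>\<^sup>+x\<in>Q. (maxQ_nn Q g x)^2 \<partial>lebesgue) = (\<integral>\<^sup>+x. (maxQ_nn Q g x)^2 \<partial>?M)"
    by (simp add: nn_integral_restrict_space)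
  also have "\<dots> \<le> (\<integral>\<^sup>+x. (\<integral>\<^sup>+s. (if 0 < s \<and> ennreal (2 * s) \<le> maxQ_nn Q g x
      then ennreal (8 * s) else 0) \<partial>lborel) \<partial>?M)"
    by (intro nn_integral_mono square_le_nn_integral_layers)
  also have "\<dots> = (\<integral>\<^sup>+s. (\<integral>\<^sup>+x. (if 0 < s \<and> ennreal (2 * s) \<le> maxQ_nn Q g x
      then ennreal (8 * s) else 0) \<partial>?M) \<partial>lborel)"
    by (rule P.Fubini'[symmetric]) measurable
  also have "\<dots> \<le> (\<integral>\<^sup>+s. (\<integral>\<^sup>+x. (if 0 < s then ennreal (16 * ?K) *
      (if ennreal (s / 2) < g x then g x else 0) else 0) \<partial>?M) \<partial>lborel)"
    (is "(\<integral>\<^sup>+s. ?L s \<partial>lborel) \<le> (\<integral>\<^sup>+s. ?R s \<partial>lborel)")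
  proof (rule nn_integral_mono)
    fix s :: real
    show "?L s \<le> ?R s"
      using nn_integral_maxQ_nn_level_le[OF Q g, of s] by (cases "0 < s") simp_all
  qed
  also have "\<dots> = (\<integral>\<^sup>+x. (\<integral>\<^sup>+s. (if 0 < s then ennreal (16 * ?K) *
      (if ennreal (s / 2) < g x then g x else 0) else 0) \<partial>lborel) \<partial>?M)"
    by (rule P.Fubini') measurable
  also have "\<dots> \<le> (\<integral>\<^sup>+x. 2 * ennreal (16 * ?K) * (g x)^2 \<partial>?M)"
    by (intro nn_integral_mono nn_integral_truncation_le)
  also have "\<dots> = 2 * ennreal (16 * ?K) * (\<integral>\<^sup>+x\<in>Q. (g x)^2 \<partial>lebesgue)"
    by (simp add: nn_integral_cmult nn_integral_restrict_space)
  also have "2 * ennreal (16 * ?K) = ennreal (32 * ?K)"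
    using ennreal_mult[of 2 "16 * ?K"] by simp
  finally show ?thesis .
qed

section \<open>Rubio de Francia iteration\<close>

lemma borel_measurable_iterate_maxQ_nn:
  assumes "is_cube Q" "h \<in> borel_measurable lebesgue"
  shows "(maxQ_nn Q ^^ k) h \<in> borel_measurable lebesgue"
  using assms by (cases k) (simp_all add: borel_measurable_maxQ_nn)

lemma nn_integral_iterate_maxQ_nn_square_le:
  fixes Q :: "(real^'n) set"
  assumes Q: "is_cube Q" and h: "h \<in> borel_measurable lebesgue"
  shows "(\<integral>\<^sup>+x\<in>Q. ((maxQ_nn Q ^^ k) h x)^2 \<partial>lebesgue)
    \<le> ennreal ((32 * (10 * real CARD('n)) ^ CARD('n)) ^ k) * (\<integral>\<^sup>+x\<in>Q. (h x)^2 \<partial>lebesgue)"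
proof (induction k)
  case (Suc k)
  let ?K = "32 * (10 * real CARD('n)) ^ CARD('n)"
  have "(\<integral>\<^sup>+x\<in>Q. ((maxQ_nn Q ^^ Suc k) h x)^2 \<partial>lebesgue)
      \<le> ennreal ?K * (\<integral>\<^sup>+x\<in>Q. ((maxQ_nn Q ^^ k) h x)^2 \<partial>lebesgue)"
    using nn_integral_maxQ_nn_square_le[OF Q borel_measurable_iterate_maxQ_nn[OF Q h]] by simp
  also have "\<dots> \<le> ennreal ?K * (ennreal (?K ^ k) * (\<integral>\<^sup>+x\<in>Q. (h x)^2 \<partial>lebesgue))"
    by (intro mult_left_mono Suc.IH) simp
  also have "\<dots> = ennreal (?K ^ Suc k) * (\<integral>\<^sup>+x\<in>Q. (h x)^2 \<partial>lebesgue)"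
    by (simp add: ennreal_mult mult.assoc)
  finally show ?case .
qed simp

text \<open>Rubio de Francia's construction \<open>R h = \<Sum>\<^sub>k c\<^sup>k M\<^sub>Q\<^sup>k h\<close>: for \<open>c\<close> small compared with the
  \<open>L\<^sup>2\<close> bound of \<open>M\<^sub>Q\<close> the series is integrable on \<open>Q\<close>, and \<open>M\<^sub>Q (R h) \<le> R h / c\<close>.\<close>
definition rubio_sum :: "(real^'n) set \<Rightarrow> real \<Rightarrow> (real^'n \<Rightarrow> ennreal) \<Rightarrow> real^'n \<Rightarrow> ennreal" where
  "rubio_sum Q c h x = (\<Sum>k. ennreal (c ^ k) * (maxQ_nn Q ^^ k) h x)"

lemma borel_measurable_rubio_sum:
  "is_cube Q \<Longrightarrow> h \<in> borel_measurable lebesgue \<Longrightarrow> rubio_sum Q c h \<in> borel_measurable lebesgue"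
  unfolding rubio_sum_def[abs_def] using borel_measurable_iterate_maxQ_nn by measurable

lemma le_rubio_sum: "h x \<le> rubio_sum Q c h x"
proof -
  have "h x = (\<Sum>k<1. ennreal (c ^ k) * (maxQ_nn Q ^^ k) h x)" by simp
  also have "\<dots> \<le> rubio_sum Q c h x"
    unfolding rubio_sum_def by (rule sum_le_suminf) (auto intro: summableI)
  finally show ?thesis .
qed

lemma maxQ_nn_rubio_sum_le:
  assumes Q: "is_cube Q" and h: "h \<in> borel_measurable lebesgue" and c: "c > 0"
  shows "maxQ_nn Q (rubio_sum Q c h) x \<le> ennreal (1 / c) * rubio_sum Q c h x"
proof -
  let ?T = "\<lambda>k. ennreal (c ^ k) * (maxQ_nn Q ^^ k) h x"
  have "maxQ_nn Q (rubio_sum Q c h) x \<le> (\<Sum>k. ennreal (c ^ k) * maxQ_nn Q ((maxQ_nn Q ^^ k) h) x)"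
    unfolding rubio_sum_def[abs_def]
    by (rule maxQ_nn_suminf_le) (rule borel_measurable_iterate_maxQ_nn[OF Q h])
  also have "\<dots> = (\<Sum>k. ennreal (1 / c) * ?T (Suc k))"
  proof (intro suminf_cong)
    fix k
    have "ennreal (c ^ k) = ennreal (1 / c) * ennreal (c ^ Suc k)"
      using c by (simp add: ennreal_mult[symmetric])
    then show "ennreal (c ^ k) * maxQ_nn Q ((maxQ_nn Q ^^ k) h) x = ennreal (1 / c) * ?T (Suc k)"
      by (simp add: mult.assoc)
  qed
  also have "\<dots> = ennreal (1 / c) * (\<Sum>k. ?T (Suc k))"
    by (rule ennreal_suminf_cmult)
  also have "\<dots> \<le> ennreal (1 / c) * rubio_sum Q c h x"
    unfolding rubio_sum_def by (intro mult_left_mono suminf_Suc_le_ennreal) simp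
  finally show ?thesis .
qed

lemma one_le_maxQ_nn_L2_const: "1 \<le> 32 * (10 * real CARD('n::finite)) ^ CARD('n)"
proof -
  have "0 < CARD('n)" by simp
  then have "1 \<le> 10 * real CARD('n)" by linarith
  then have "1 \<le> (10 * real CARD('n)) ^ CARD('n)" by (rule one_le_power)
  then show ?thesis by linarith
qed

lemma nn_integral_iterate_maxQ_nn_le:
  fixes Q :: "(real^'n) set"
  assumes Q: "is_cube Q" and h: "h \<in> borel_measurable lebesgue"
  shows "(\<integral>\<^sup>+x\<in>Q. (maxQ_nn Q ^^ k) h x \<partial>lebesgue)
    \<le> (\<integral>\<^sup>+x\<in>Q. (h x)^2 \<partial>lebesgue)
      + ennreal ((32 * (10 * real CARD('n)) ^ CARD('n)) ^ k) * emeasure lebesgue Q"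
proof -
  let ?a = "ennreal ((32 * (10 * real CARD('n)) ^ CARD('n)) ^ k)"
  have a: "0 < ?a" "?a \<noteq> top" using one_le_maxQ_nn_L2_const[where 'n='n] by auto
  have "(maxQ_nn Q ^^ k) h \<in> borel_measurable (lebesgue_on Q)"
    using borel_measurable_iterate_maxQ_nn[OF Q h] by (rule measurable_restrict_space1)
  from nn_integral_le_square_divide_add[OF a this]
  have "(\<integral>\<^sup>+x\<in>Q. (maxQ_nn Q ^^ k) h x \<partial>lebesgue)
      \<le> (\<integral>\<^sup>+x\<in>Q. ((maxQ_nn Q ^^ k) h x)^2 \<partial>lebesgue) / ?a + ?a * emeasure lebesgue Q"
    using sets_lebesgue_cube[OF Q]
    by (simp add: nn_integral_restrict_space emeasure_restrict_space space_restrict_space)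
  also have "\<dots> \<le> (\<integral>\<^sup>+x\<in>Q. (h x)^2 \<partial>lebesgue) + ?a * emeasure lebesgue Q"
    using nn_integral_iterate_maxQ_nn_square_le[OF Q h, of k]
    by (intro add_right_mono divide_le_posI_ennreal a(1))
  finally show ?thesis .
qed

lemma nn_integral_rubio_sum:
  assumes Q: "is_cube Q" and h: "h \<in> borel_measurable lebesgue"
  shows "(\<integral>\<^sup>+x\<in>Q. rubio_sum Q c h x \<partial>lebesgue)
    = (\<Sum>k. ennreal (c ^ k) * (\<integral>\<^sup>+x\<in>Q. (maxQ_nn Q ^^ k) h x \<partial>lebesgue))"
proof -
  have [measurable]: "Q \<in> sets lebesgue" using sets_lebesgue_cube[OF Q] .
  have It: "(maxQ_nn Q ^^ k) h \<in> borel_measurable (lebesgue_on Q)" for k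
    using borel_measurable_iterate_maxQ_nn[OF Q h] by (rule measurable_restrict_space1)
  have "(\<integral>\<^sup>+x\<in>Q. rubio_sum Q c h x \<partial>lebesgue) = (\<integral>\<^sup>+x. rubio_sum Q c h x \<partial>lebesgue_on Q)"
    by (simp add: nn_integral_restrict_space)
  also have "\<dots> = (\<Sum>k. \<integral>\<^sup>+x. ennreal (c ^ k) * (maxQ_nn Q ^^ k) h x \<partial>lebesgue_on Q)"
    unfolding rubio_sum_def using It by (intro nn_integral_suminf) simp
  also have "\<dots> = (\<Sum>k. ennreal (c ^ k) * (\<integral>\<^sup>+x\<in>Q. (maxQ_nn Q ^^ k) h x \<partial>lebesgue))"
    using It by (simp add: nn_integral_cmult nn_integral_restrict_space)
  finally show ?thesis .
qed

lemma nn_integral_rubio_sum_less_top: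
  fixes Q :: "(real^'n) set"
  defines "c \<equiv> 1 / (2 * (32 * (10 * real CARD('n)) ^ CARD('n)))"
  assumes Q: "is_cube Q" and h[measurable]: "h \<in> borel_measurable lebesgue"
    and h2: "(\<integral>\<^sup>+x\<in>Q. (h x)^2 \<partial>lebesgue) < \<infinity>"
  shows "(\<integral>\<^sup>+x\<in>Q. rubio_sum Q c h x \<partial>lebesgue) < \<infinity>"
proof -
  let ?K = "32 * (10 * real CARD('n)) ^ CARD('n)"
  let ?N = "\<integral>\<^sup>+x\<in>Q. (h x)^2 \<partial>lebesgue"
  let ?E = "emeasure lebesgue Q"
  have K: "?K \<ge> 1" by (rule one_le_maxQ_nn_L2_const)
  then have c: "c > 0" and c_half: "c \<le> 1/2" and cK: "c * ?K = 1/2"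
    unfolding c_def by (simp_all add: field_simps)
  have [measurable]: "Q \<in> sets lebesgue" using sets_lebesgue_cube[OF Q] .
  have summand_le: "ennreal (c ^ k) * (\<integral>\<^sup>+x\<in>Q. (maxQ_nn Q ^^ k) h x \<partial>lebesgue)
      \<le> ennreal ((1/2) ^ k) * (?N + ?E)" for k
  proof -
    have "ennreal (c ^ k) * (\<integral>\<^sup>+x\<in>Q. (maxQ_nn Q ^^ k) h x \<partial>lebesgue)
        \<le> ennreal (c ^ k) * (?N + ennreal (?K ^ k) * ?E)"
      using nn_integral_iterate_maxQ_nn_le[OF Q h, of k] by (rule mult_left_mono) simp
    also have "\<dots> = ennreal (c ^ k) * ?N + ennreal (c ^ k * ?K ^ k) * ?E"
    proof -
      have "ennreal (c ^ k * ?K ^ k) = ennreal (c ^ k) * ennreal (?K ^ k)"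
        using c K by (intro ennreal_mult) auto
      then show ?thesis by (simp only: distrib_left mult.assoc)
    qed
    also have "c ^ k * ?K ^ k = (1/2) ^ k"
      using cK by (metis power_mult_distrib)
    also have "ennreal (c ^ k) * ?N \<le> ennreal ((1/2) ^ k) * ?N"
      using c c_half by (intro mult_right_mono ennreal_leI power_mono) auto
    finally show ?thesis by (simp only: distrib_left add_right_mono)
  qed
  have "(\<integral>\<^sup>+x\<in>Q. rubio_sum Q c h x \<partial>lebesgue)
      = (\<Sum>k. ennreal (c ^ k) * (\<integral>\<^sup>+x\<in>Q. (maxQ_nn Q ^^ k) h x \<partial>lebesgue))"
    by (rule nn_integral_rubio_sum[OF Q h])
  also have "\<dots> \<le> (\<Sum>k. ennreal ((1/2) ^ k) * (?N + ?E))"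
    by (intro suminf_le summand_le) auto
  also have "\<dots> = (\<Sum>k. ennreal ((1/2) ^ k)) * (?N + ?E)"
    by (rule ennreal_suminf_multc)
  also have "(\<Sum>k. ennreal ((1/2) ^ k)) = ennreal 2"
    using geometric_sums[of "1/2::real"] by (intro suminf_ennreal_eq) auto
  also have "ennreal 2 * (?N + ?E) < \<infinity>"
    using h2 emeasure_cube_less_top[OF Q] by (simp add: ennreal_mult_less_top)
  finally show ?thesis .
qed

lemma A1_enn2real:
  fixes Q :: "(real^'n) set"
  assumes Q: "is_cube Q" and V[measurable]: "V \<in> borel_measurable lebesgue"
    and V_int: "(\<integral>\<^sup>+x\<in>Q. V x \<partial>lebesgue) < \<infinity>" and V_ge: "\<And>x. x \<in> Q \<Longrightarrow> 1 \<le> V x"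
    and V_max: "\<And>x. x \<in> Q \<Longrightarrow> maxQ_nn Q V x \<le> ennreal C * V x" and C: "C \<ge> 0"
  shows "A1 Q (\<lambda>x. enn2real (V x))"
    and "AE x in lebesgue_on Q. ennreal (enn2real (V x)) = V x"
proof -
  let ?M = "lebesgue_on Q"
  let ?v = "\<lambda>x. enn2real (V x)"
  have [measurable]: "Q \<in> sets lebesgue" using sets_lebesgue_cube[OF Q] .
  have VM[measurable]: "V \<in> borel_measurable ?M" by (rule measurable_restrict_space1[OF V])
  have V_int': "(\<integral>\<^sup>+x. V x \<partial>?M) < \<infinity>" using V_int by (simp add: nn_integral_restrict_space)
  have "AE x in ?M. V x \<noteq> top"
    using nn_integral_PInf_AE[OF VM] V_int' by simp
  then show V_eq: "AE x in ?M. ennreal (?v x) = V x"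
    by eventually_elim (simp add: ennreal_enn2real_if)
  have "AE x in ?M. 1 \<le> V x" by (rule AE_I2) (simp add: V_ge space_restrict_space)
  with V_eq have v_ge: "AE x in ?M. 1 \<le> ?v x"
    by eventually_elim (metis ennreal_ge_1)
  have "integrable ?M ?v"
  proof (rule integrableI_bounded)
    have "(\<integral>\<^sup>+x. ennreal (norm (?v x)) \<partial>?M) \<le> (\<integral>\<^sup>+x. V x \<partial>?M)"
      by (intro nn_integral_mono) (simp add: ennreal_enn2real_if)
    then show "(\<integral>\<^sup>+x. ennreal (norm (?v x)) \<partial>?M) < \<infinity>" using V_int' by (rule le_less_trans)
  qed measurable
  moreover have "AE x in ?M. 0 < ?v x" using v_ge by eventually_elim simp
  moreover have "AE x in ?M. maxQ Q ?v x \<le> ennreal (C * ?v x)"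
    using V_eq
  proof eventually_elim
    case (elim x)
    have "maxQ Q ?v x \<le> maxQ_nn Q V x"
      unfolding maxQ_eq_maxQ_nn by (rule maxQ_nn_mono) (simp add: ennreal_enn2real_if)
    also have "\<dots> \<le> ennreal C * V x"
      by (cases "x \<in> Q") (simp_all add: V_max maxQ_nn_outside)
    also have "\<dots> = ennreal (C * ?v x)" using elim C by (simp add: ennreal_mult)
    finally show ?case .
  qed
  ultimately show "A1 Q ?v" by (auto simp: A1_def weight_def)
qed

lemma nn_integral_powr_half_plus_one_square_less_top:
  assumes Q: "is_cube Q" and f: "f \<in> Lp p Q"
  shows "(\<integral>\<^sup>+x\<in>Q. (ennreal (\<bar>f x\<bar> powr (p/2) + 1))^2 \<partial>lebesgue) < \<infinity>"
proof -
  let ?M = "lebesgue_on Q"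
  have [measurable]: "Q \<in> sets lebesgue" using sets_lebesgue_cube[OF Q] .
  have [measurable]: "f \<in> borel_measurable ?M"
    and f_int: "(\<integral>\<^sup>+x. ennreal (\<bar>f x\<bar> powr p) \<partial>?M) < \<infinity>"
    using f by (auto simp: Lp_def Lpw_def nn_integral_restrict_space)
  have "(ennreal (\<bar>f x\<bar> powr (p/2) + 1))^2 \<le> 2 * ennreal (\<bar>f x\<bar> powr p) + 2" for x
  proof -
    define a where "a = \<bar>f x\<bar> powr (p/2)"
    have a: "a \<ge> 0" "a * a = \<bar>f x\<bar> powr p" by (simp_all add: a_def flip: powr_add)
    then have "(ennreal (a + 1))^2 = ennreal ((a + 1)^2)" using ennreal_power[of "a + 1" 2] by simp
    also have "\<dots> \<le> ennreal (2 * \<bar>f x\<bar> powr p + 2)"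
      using zero_le_power2[of "a - 1"] a(2)
      by (intro ennreal_leI) (simp add: power2_eq_square algebra_simps)
    also have "\<dots> = 2 * ennreal (\<bar>f x\<bar> powr p) + 2"
      using ennreal_plus[of "2 * \<bar>f x\<bar> powr p" 2] ennreal_mult[of 2 "\<bar>f x\<bar> powr p"] by simp
    finally show ?thesis by (simp add: a_def)
  qed
  then have "(\<integral>\<^sup>+x. (ennreal (\<bar>f x\<bar> powr (p/2) + 1))^2 \<partial>?M)
      \<le> (\<integral>\<^sup>+x. 2 * ennreal (\<bar>f x\<bar> powr p) + 2 \<partial>?M)"
    by (intro nn_integral_mono)
  also have "\<dots> = 2 * (\<integral>\<^sup>+x. ennreal (\<bar>f x\<bar> powr p) \<partial>?M) + 2 * emeasure ?M (space ?M)"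
    by (simp add: nn_integral_add nn_integral_cmult)
  also have "\<dots> < \<infinity>"
    using f_int emeasure_lebesgue_on_cube_less_top[OF Q] by (simp add: ennreal_mult_less_top)
  finally show ?thesis by (simp add: nn_integral_restrict_space)
qed

lemma A1_majorant_of_Lp:
  fixes Q :: "(real^'n) set" and f :: "real^'n \<Rightarrow> real"
  assumes Q: "is_cube Q" and f: "f \<in> Lp p Q"
  obtains v where "A1 Q v" "AE x in lebesgue_on Q. \<bar>f x\<bar> powr (p/2) \<le> v x \<and> 1 \<le> v x"
proof -
  let ?M = "lebesgue_on Q"
  have [measurable]: "Q \<in> sets lebesgue" "f \<in> borel_measurable ?M"
    using sets_lebesgue_cube[OF Q] f by (auto simp: Lp_def Lpw_def)
  define h where "h x = ennreal (if x \<in> Q then \<bar>f x\<bar> powr (p/2) + 1 else 0)" for x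
  have hm[measurable]: "h \<in> borel_measurable lebesgue"
  proof -
    have "(\<lambda>x. if x \<in> Q then \<bar>f x\<bar> powr (p/2) + 1 else 0) \<in> borel_measurable lebesgue"
      by (subst measurable_restrict_space_iff[symmetric]) auto
    then show ?thesis unfolding h_def by measurable
  qed
  have "(\<integral>\<^sup>+x\<in>Q. (h x)^2 \<partial>lebesgue) = (\<integral>\<^sup>+x\<in>Q. (ennreal (\<bar>f x\<bar> powr (p/2) + 1))^2 \<partial>lebesgue)"
    by (intro nn_integral_cong) (simp add: h_def split: split_indicator)
  then have h2: "(\<integral>\<^sup>+x\<in>Q. (h x)^2 \<partial>lebesgue) < \<infinity>"
    using nn_integral_powr_half_plus_one_square_less_top[OF Q f] by simp
  define c where "c = 1 / (2 * (32 * (10 * real CARD('n)) ^ CARD('n)))"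
  have c: "c > 0" by (simp add: c_def)
  let ?V = "rubio_sum Q c h"
  have V_int: "(\<integral>\<^sup>+x\<in>Q. ?V x \<partial>lebesgue) < \<infinity>"
    unfolding c_def by (rule nn_integral_rubio_sum_less_top[OF Q hm h2])
  have V_ge: "1 \<le> ?V x" if "x \<in> Q" for x
  proof -
    have "(1::ennreal) \<le> h x" using that by (simp add: h_def add_increasing)
    then show ?thesis using le_rubio_sum[of h x Q c] by (rule order_trans)
  qed
  note V = A1_enn2real[OF Q borel_measurable_rubio_sum[OF Q hm] V_int V_ge
      maxQ_nn_rubio_sum_le[OF Q hm c]]
  have v_A1: "A1 Q (\<lambda>x. enn2real (?V x))" and V_eq: "AE x in ?M. ennreal (enn2real (?V x)) = ?V x"
    using V c by auto
  have "AE x in ?M. \<bar>f x\<bar> powr (p/2) \<le> enn2real (?V x) \<and> 1 \<le> enn2real (?V x)"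
    using V_eq AE_space
  proof eventually_elim
    case (elim x)
    then have "ennreal (\<bar>f x\<bar> powr (p/2) + 1) \<le> ennreal (enn2real (?V x))"
      using le_rubio_sum[of h x Q c] by (simp add: h_def space_restrict_space)
    then have "\<bar>f x\<bar> powr (p/2) + 1 \<le> enn2real (?V x)" by (subst (asm) ennreal_le_iff) auto
    then show ?case using powr_ge_zero[of "\<bar>f x\<bar>" "p/2"] by linarith
  qed
  with v_A1 show ?thesis by (rule that)
qed

section \<open>Weights\<close>

lemma Lp_subset_MA1:
  assumes "is_cube Q"
  shows "Lp p Q \<subseteq> MA1 (p/2) Q"
proof
  fix f assume f: "f \<in> Lp p Q"
  obtain v where "A1 Q v" "AE x in lebesgue_on Q. \<bar>f x\<bar> powr (p/2) \<le> v x \<and> 1 \<le> v x"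
    using A1_majorant_of_Lp[OF assms f] by blast
  then show "f \<in> MA1 (p/2) Q"
    using f by (auto simp: MA1_def Lp_def Lpw_def elim!: eventually_mono)
qed

lemma MA1_subset_Lp:
  assumes "is_cube Q"
  shows "MA1 r Q \<subseteq> Lp r Q"
proof
  fix f assume "f \<in> MA1 r Q"
  then obtain w where fm: "f \<in> borel_measurable (lebesgue_on Q)" and "A1 Q w"
    and le: "AE x in lebesgue_on Q. \<bar>f x\<bar> powr r \<le> w x"
    by (auto simp: MA1_def)
  then have "integrable (lebesgue_on Q) w" by (simp add: A1_def weight_def)
  have "(\<integral>\<^sup>+x. ennreal (\<bar>f x\<bar> powr r * 1) \<partial>lebesgue_on Q)
      \<le> (\<integral>\<^sup>+x. ennreal (norm (w x)) \<partial>lebesgue_on Q)"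
    using le by (intro nn_integral_mono_AE) (auto elim!: eventually_mono intro!: ennreal_leI)
  also have "\<dots> < \<infinity>" using \<open>integrable _ w\<close> by (simp add: integrable_iff_bounded)
  finally show "f \<in> Lp r Q"
    using fm sets_lebesgue_cube[OF assms] by (simp add: Lp_def Lpw_def nn_integral_restrict_space)
qed

lemma Lp_subset_Lp:
  assumes Q: "is_cube Q" and q: "0 < q" "q \<le> p"
  shows "Lp p Q \<subseteq> Lp q Q"
proof
  fix f assume "f \<in> Lp p Q"
  let ?M = "lebesgue_on Q"
  have [measurable]: "Q \<in> sets lebesgue" using sets_lebesgue_cube[OF Q] .
  have fm[measurable]: "f \<in> borel_measurable ?M"
    and f_int: "(\<integral>\<^sup>+x. ennreal (\<bar>f x\<bar> powr p) \<partial>?M) < \<infinity>"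
    using \<open>f \<in> Lp p Q\<close> by (auto simp: Lp_def Lpw_def nn_integral_restrict_space)
  have "\<bar>f x\<bar> powr q \<le> \<bar>f x\<bar> powr p + 1" for x
  proof (cases "\<bar>f x\<bar> \<le> 1")
    case True
    then have "\<bar>f x\<bar> powr q \<le> 1" using q by (intro powr_le1) auto
    then show ?thesis by (smt (verit) powr_ge_zero)
  next
    case False
    then have "\<bar>f x\<bar> powr q \<le> \<bar>f x\<bar> powr p" using q by (intro powr_mono) auto
    then show ?thesis by simp
  qed
  then have "ennreal (\<bar>f x\<bar> powr q * 1) \<le> ennreal (\<bar>f x\<bar> powr p) + 1" for x
    using ennreal_leI ennreal_plus[of "\<bar>f x\<bar> powr p" 1] by fastforce
  then have "(\<integral>\<^sup>+x. ennreal (\<bar>f x\<bar> powr q * 1) \<partial>?M) \<le> (\<integral>\<^sup>+x. ennreal (\<bar>f x\<bar> powr p) + 1 \<partial>?M)"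
    by (intro nn_integral_mono)
  also have "\<dots> = (\<integral>\<^sup>+x. ennreal (\<bar>f x\<bar> powr p) \<partial>?M) + emeasure ?M (space ?M)"
    by (simp add: nn_integral_add)
  also have "\<dots> < \<infinity>"
    using f_int emeasure_lebesgue_on_cube_less_top[OF Q] by simp
  finally show "f \<in> Lp q Q" using fm by (simp add: Lp_def Lpw_def nn_integral_restrict_space)
qed

lemma avg_eq_nn_integral_lebesgue_on:
  assumes "Q' \<subseteq> Q" "Q \<in> sets lebesgue"
  shows "avg Q' f = (\<integral>\<^sup>+x. ennreal \<bar>f x\<bar> * indicator Q' x \<partial>lebesgue_on Q) / emeasure lebesgue Q'"
proof -
  have "(\<integral>\<^sup>+x\<in>Q'. ennreal \<bar>f x\<bar> \<partial>lebesgue)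
      = (\<integral>\<^sup>+x. ennreal \<bar>f x\<bar> * indicator Q' x \<partial>lebesgue_on Q)"
    using assms
    by (subst nn_integral_restrict_space) (auto intro!: nn_integral_cong split: split_indicator)
  then show ?thesis by (simp add: avg_def)
qed

lemma avg_mult_eq_nn_integral_lebesgue_on:
  assumes "Q' \<subseteq> Q" "Q \<in> sets lebesgue" "Q' \<in> sets lebesgue" "f \<in> borel_measurable (lebesgue_on Q)"
  shows "avg Q' f * c = (\<integral>\<^sup>+x. ennreal \<bar>f x\<bar> * c * indicator Q' x \<partial>lebesgue_on Q) / emeasure lebesgue Q'"
proof -
  have [measurable]: "Q' \<in> sets (lebesgue_on Q)"
    using assms(1,2,3) by (simp add: sets_restrict_space_iff Int_absorb1)
  have "(\<integral>\<^sup>+x. ennreal \<bar>f x\<bar> * c * indicator Q' x \<partial>lebesgue_on Q)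
      = (\<integral>\<^sup>+x. ennreal \<bar>f x\<bar> * indicator Q' x \<partial>lebesgue_on Q) * c"
    using assms(4) by (subst nn_integral_multc[symmetric]) (auto simp: mult_ac)
  then show ?thesis
    using assms(1,2) by (simp add: avg_eq_nn_integral_lebesgue_on divide_ennreal_def mult_ac)
qed

lemma inverse_power_powr_minus_inverse:
  fixes v :: real
  assumes "0 < v" "t \<ge> 1"
  shows "inverse (v ^ t) powr (- 1 / real t) = v"
proof -
  have "inverse (v ^ t) = v powr (- real t)"
    using assms(1) by (simp add: powr_minus powr_realpow)
  then show ?thesis using assms by (simp add: powr_powr)
qed

lemma weight_inverse_power:
  assumes Q: "is_cube Q" and v: "v \<in> borel_measurable (lebesgue_on Q)"
    and v_ge: "AE x in lebesgue_on Q. 1 \<le> v x"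
  shows "weight Q (\<lambda>x. inverse (v x ^ t))"
  unfolding weight_def
proof
  let ?M = "lebesgue_on Q"
  have bounded: "AE x in ?M. 0 < inverse (v x ^ t) \<and> inverse (v x ^ t) \<le> 1"
    using v_ge
  proof eventually_elim
    case (elim x)
    then have "1 \<le> v x ^ t" by (rule one_le_power)
    then show ?case using le_imp_inverse_le[of 1 "v x ^ t"] by simp
  qed
  show "integrable ?M (\<lambda>x. inverse (v x ^ t))"
  proof (rule integrableI_bounded)
    have "AE x in ?M. ennreal (norm (inverse (v x ^ t))) \<le> 1"
      using bounded by eventually_elim simp
    then have "(\<integral>\<^sup>+x. ennreal (norm (inverse (v x ^ t))) \<partial>?M) \<le> (\<integral>\<^sup>+x. 1 \<partial>?M)"
      by (rule nn_integral_mono_AE)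
    also have "\<dots> < \<infinity>" using emeasure_lebesgue_on_cube_less_top[OF Q] by simp
    finally show "(\<integral>\<^sup>+x. ennreal (norm (inverse (v x ^ t))) \<partial>?M) < \<infinity>" .
  qed (use v in measurable)
  show "AE x in ?M. 0 < inverse (v x ^ t)" using bounded by eventually_elim simp
qed

lemma one_le_avg:
  assumes "is_cube Q'" "Q' \<subseteq> Q" "Q \<in> sets lebesgue" and v_ge: "AE x in lebesgue_on Q. 1 \<le> v x"
  shows "1 \<le> avg Q' v"
proof -
  have "emeasure lebesgue Q' = (\<integral>\<^sup>+x. 1 * indicator Q' x \<partial>lebesgue_on Q)"
    using assms(2,3) sets_lebesgue_cube[OF assms(1)]
    by (simp add: nn_integral_indicator emeasure_restrict_space sets_restrict_space_iff Int_absorb1)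
  also have "\<dots> \<le> (\<integral>\<^sup>+x. ennreal \<bar>v x\<bar> * indicator Q' x \<partial>lebesgue_on Q)"
    using v_ge by (intro nn_integral_mono_AE) (auto elim!: eventually_mono split: split_indicator)
  finally have "emeasure lebesgue Q' / emeasure lebesgue Q' \<le> avg Q' v"
    using assms by (simp add: avg_eq_nn_integral_lebesgue_on divide_right_mono_ennreal)
  then show ?thesis
    using emeasure_cube_neq_0[OF assms(1)] emeasure_cube_less_top[OF assms(1)]
    by (simp add: ennreal_divide_self)
qed

lemma ennreal_inverse_power_mult_power_le:
  fixes A :: ennreal and C v :: real
  assumes "1 \<le> A" "A \<le> ennreal (C * v)" "1 \<le> v"
  shows "ennreal (inverse (v ^ t)) * A ^ t \<le> ennreal (C ^ t)"
proof -
  have Cv: "1 \<le> C * v" using assms(1,2) by (metis ennreal_ge_1 order_trans)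
  have "A ^ t \<le> ennreal ((C * v) ^ t)"
    using power_mono[OF assms(2), of t] Cv by (simp add: ennreal_power)
  then have "ennreal (inverse (v ^ t)) * A ^ t \<le> ennreal (inverse (v ^ t) * (C * v) ^ t)"
    using Cv assms(3) by (simp add: ennreal_mult mult_left_mono)
  also have "inverse (v ^ t) * (C * v) ^ t = C ^ t"
    using assms(3) by (simp add: power_mult_distrib field_simps)
  finally show ?thesis .
qed

text \<open>On a subcube \<open>Q'\<close>, \<open>avg Q' v \<le> M\<^sub>Q v \<le> C v\<close> bounds \<open>v\<^sup>-\<^sup>t\<close> by \<open>(C / avg Q' v)\<^sup>t\<close>; since
  \<open>avg Q' v \<ge> 1\<close>, this gives the \<open>A\<^sub>1\<^sub>+\<^sub>t\<close> condition.\<close>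
lemma avg_inverse_power_mult_avg_le:
  assumes Q: "is_cube Q" and Q': "is_cube Q'" "Q' \<subseteq> Q"
    and v[measurable]: "v \<in> borel_measurable (lebesgue_on Q)"
    and v_ge: "AE x in lebesgue_on Q. 1 \<le> v x"
    and v_max: "AE x in lebesgue_on Q. maxQ Q v x \<le> ennreal (C * v x)" and t: "t \<ge> 1"
  shows "avg Q' (\<lambda>x. inverse (v x ^ t)) * avg Q' v \<le> ennreal (C ^ t)"
proof -
  let ?M = "lebesgue_on Q"
  let ?E = "emeasure lebesgue Q'"
  define A where "A = avg Q' v"
  have QS[measurable]: "Q \<in> sets lebesgue" using sets_lebesgue_cube[OF Q] .
  have [measurable]: "Q' \<in> sets ?M"
    using Q'(2) sets_lebesgue_cube[OF Q'(1)] by (simp add: sets_restrict_space_iff Int_absorb1)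
  have A: "1 \<le> A" unfolding A_def using one_le_avg[OF Q' QS v_ge] .
  have pointwise: "AE x in ?M. ennreal \<bar>inverse (v x ^ t)\<bar> * A ^ t * indicator Q' x
      \<le> ennreal (C ^ t) * indicator Q' x"
    using v_ge v_max
  proof eventually_elim
    case (elim x)
    show ?case
    proof (cases "x \<in> Q'")
      case True
      have "A \<le> maxQ Q v x"
        unfolding maxQ_def A_def by (rule SUP_upper) (use Q' True in auto)
      then have "A \<le> ennreal (C * v x)" using elim(2) by (rule order_trans)
      from ennreal_inverse_power_mult_power_le[OF A this elim(1)] show ?thesis
        using True elim(1) by simp
    qed simp
  qed
  have "avg Q' (\<lambda>x. inverse (v x ^ t)) * A \<le> avg Q' (\<lambda>x. inverse (v x ^ t)) * A ^ t"
    using power_increasing[of 1 t A] A t by (intro mult_left_mono) auto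
  also have "\<dots> = (\<integral>\<^sup>+x. ennreal \<bar>inverse (v x ^ t)\<bar> * A ^ t * indicator Q' x \<partial>?M) / ?E"
    by (rule avg_mult_eq_nn_integral_lebesgue_on[OF Q'(2) QS sets_lebesgue_cube[OF Q'(1)]])
      measurable
  also have "\<dots> \<le> (\<integral>\<^sup>+x. ennreal (C ^ t) * indicator Q' x \<partial>?M) / ?E"
    by (intro divide_right_mono_ennreal nn_integral_mono_AE pointwise)
  also have "\<dots> = ennreal (C ^ t)"
    using emeasure_cube_neq_0[OF Q'(1)] emeasure_cube_less_top[OF Q'(1)] Q'(2) QS
    by (simp add: nn_integral_cmult_indicator emeasure_restrict_space ennreal_mult_divide_eq Int_absorb2)
  finally show ?thesis unfolding A_def .
qed

lemma Aq_inverse_power_of_A1: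
  assumes Q: "is_cube Q" and v: "A1 Q v" "AE x in lebesgue_on Q. 1 \<le> v x" and t: "t \<ge> 1"
  shows "Aq Q (1 + real t) (\<lambda>x. inverse (v x ^ t))"
proof -
  let ?w = "\<lambda>x. inverse (v x ^ t)"
  let ?e = "1 - (1 + real t) / (1 + real t - 1)"
  obtain C where C: "AE x in lebesgue_on Q. maxQ Q v x \<le> ennreal (C * v x)"
    using v(1) by (auto simp: A1_def)
  have vm: "v \<in> borel_measurable (lebesgue_on Q)" using v(1) by (auto simp: A1_def weight_def)
  then have "weight Q ?w" by (rule weight_inverse_power[OF Q _ v(2)])
  have e: "?e = - 1 / real t" using t by (simp add: field_simps)
  have "avg Q' ?w * avg Q' (\<lambda>x. ?w x powr ?e) \<le> ennreal (C ^ t)"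
    if Q': "is_cube Q'" "Q' \<subseteq> Q" for Q'
  proof -
    have "AE x in lebesgue_on Q. ennreal \<bar>?w x powr ?e\<bar> * indicator Q' x
        = ennreal \<bar>v x\<bar> * indicator Q' x"
      using v(2)
    proof eventually_elim
      case (elim x)
      then have "?w x powr ?e = v x"
        unfolding e using t by (intro inverse_power_powr_minus_inverse) auto
      then show ?case by (simp only:)
    qed
    then have "(\<integral>\<^sup>+x. ennreal \<bar>?w x powr ?e\<bar> * indicator Q' x \<partial>lebesgue_on Q)
        = (\<integral>\<^sup>+x. ennreal \<bar>v x\<bar> * indicator Q' x \<partial>lebesgue_on Q)"
      by (rule nn_integral_cong_AE)
    then have "avg Q' (\<lambda>x. ?w x powr ?e) = avg Q' v"
      using Q'(2) sets_lebesgue_cube[OF Q] by (simp add: avg_eq_nn_integral_lebesgue_on)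
    then show ?thesis using avg_inverse_power_mult_avg_le[OF Q Q' vm v(2) C t] by simp
  qed
  then have "(SUP Q'\<in>{Q'. is_cube Q' \<and> Q' \<subseteq> Q}. avg Q' ?w * avg Q' (\<lambda>x. ?w x powr ?e)) < \<infinity>"
    by (intro le_less_trans[OF SUP_least]) auto
  with \<open>weight Q ?w\<close> show ?thesis by (simp add: Aq_def)
qed

text \<open>With \<open>p\<^sub>1 = min p p\<^sub>0\<close>, take \<open>v \<in> A\<^sub>1\<close> with \<open>|f|\<^bsup>p\<^sub>1/2\<^esup> \<le> v\<close> and \<open>v \<ge> 1\<close>; then for
  \<open>t \<ge> 2 p\<^sub>0 / p\<^sub>1\<close> the weight \<open>w = v\<^sup>-\<^sup>t\<close> satisfies \<open>|f|\<^bsup>p\<^sub>0\<^esup> w \<le> 1\<close>.\<close>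
lemma Lp_subset_Lpw_Ainf:
  fixes Q :: "(real^'n) set"
  assumes Q: "is_cube Q" and p: "0 < p" and p0: "0 < p0" and f: "f \<in> Lp p Q"
  shows "\<exists>w. Ainf Q w \<and> f \<in> Lpw p0 w Q"
proof -
  let ?M = "lebesgue_on Q"
  define p1 where "p1 = min p p0"
  have p1: "0 < p1" "p1 \<le> p" "p1 \<le> p0" using p p0 by (auto simp: p1_def)
  have "f \<in> Lp p1 Q" using Lp_subset_Lp[OF Q p1(1,2)] f by blast
  then obtain v where v: "A1 Q v" and v_maj: "AE x in ?M. \<bar>f x\<bar> powr (p1/2) \<le> v x \<and> 1 \<le> v x"
    using A1_majorant_of_Lp[OF Q] by blast
  define t where "t = nat \<lceil>2 * p0 / p1\<rceil>"
  have t: "2 * p0 / p1 \<le> real t" unfolding t_def by linarith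
  moreover have "2 \<le> 2 * p0 / p1" using p1 by (simp add: field_simps)
  ultimately have "t \<ge> 1" by linarith
  have "AE x in ?M. 1 \<le> v x" using v_maj by eventually_elim simp
  then have Ainf: "Ainf Q (\<lambda>x. inverse (v x ^ t))"
    using Aq_inverse_power_of_A1[OF Q v _ \<open>t \<ge> 1\<close>] \<open>t \<ge> 1\<close> by (auto simp: Ainf_def)
  have "AE x in ?M. ennreal (\<bar>f x\<bar> powr p0 * inverse (v x ^ t)) \<le> 1"
    using v_maj
  proof eventually_elim
    case (elim x)
    have "\<bar>f x\<bar> powr p0 = (\<bar>f x\<bar> powr (p1/2)) powr (2 * p0 / p1)"
      using p1 by (simp add: powr_powr)
    also have "\<dots> \<le> v x powr (2 * p0 / p1)"
      using elim p1 p0 by (intro powr_mono2) auto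
    also have "\<dots> \<le> v x ^ t" using elim t by (simp add: powr_realpow[symmetric] powr_mono)
    finally show ?case using elim by (simp add: field_simps ennreal_le_1)
  qed
  then have "(\<integral>\<^sup>+x. ennreal (\<bar>f x\<bar> powr p0 * inverse (v x ^ t)) \<partial>?M) \<le> (\<integral>\<^sup>+x. 1 \<partial>?M)"
    by (rule nn_integral_mono_AE)
  also have "\<dots> < \<infinity>" using emeasure_lebesgue_on_cube_less_top[OF Q] by simp
  finally have "f \<in> Lpw p0 (\<lambda>x. inverse (v x ^ t)) Q"
    using f sets_lebesgue_cube[OF Q] by (simp add: Lp_def Lpw_def nn_integral_restrict_space)
  with Ainf show ?thesis by blast
qed

lemma avg_weight_pos:
  assumes Q: "is_cube Q" and w: "weight Q w"
  shows "0 < avg Q w"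
proof -
  let ?M = "lebesgue_on Q"
  have [measurable]: "Q \<in> sets lebesgue" using sets_lebesgue_cube[OF Q] .
  have [measurable]: "w \<in> borel_measurable ?M" and w_pos: "AE x in ?M. 0 < w x"
    using w by (auto simp: weight_def)
  have "(\<integral>\<^sup>+x. ennreal \<bar>w x\<bar> \<partial>?M) \<noteq> 0"
  proof
    assume "(\<integral>\<^sup>+x. ennreal \<bar>w x\<bar> \<partial>?M) = 0"
    then have "AE x in ?M. ennreal \<bar>w x\<bar> = 0" by (subst (asm) nn_integral_0_iff_AE) auto
    with w_pos have "AE x in ?M. False" by eventually_elim auto
    then have "emeasure ?M (space ?M) = 0" by (subst (asm) AE_iff_measurable[of "space ?M"]) auto
    then show False
      using emeasure_cube_neq_0[OF Q] by (simp add: emeasure_restrict_space space_restrict_space)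
  qed
  then show ?thesis
    using emeasure_cube_less_top[OF Q]
    by (simp add: avg_def nn_integral_restrict_space ennreal_zero_less_divide zero_less_iff_neq_zero)
qed

lemma avg_weight_less_top:
  assumes Q: "is_cube Q" and w: "weight Q w"
  shows "avg Q w < \<infinity>"
proof -
  have "(\<integral>\<^sup>+x. ennreal \<bar>w x\<bar> \<partial>lebesgue_on Q) < \<infinity>"
    using w by (simp add: weight_def integrable_iff_bounded)
  then show ?thesis
    using emeasure_cube_neq_0[OF Q] sets_lebesgue_cube[OF Q]
    by (simp add: avg_def nn_integral_restrict_space less_top[symmetric] ennreal_divide_eq_top_iff)
qed

text \<open>On \<open>Q\<close>, an \<open>A\<^sub>1\<close> weight satisfies \<open>avg Q w \<le> M\<^sub>Q w \<le> C w\<close>.\<close>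
lemma A1_bounded_below:
  assumes Q: "is_cube Q" and w: "A1 Q w"
  obtains c where "c > 0" "AE x in lebesgue_on Q. c \<le> w x"
proof -
  let ?M = "lebesgue_on Q"
  have weight: "weight Q w" and w_pos: "AE x in ?M. 0 < w x"
    using w by (auto simp: A1_def weight_def)
  obtain C where C: "AE x in ?M. maxQ Q w x \<le> ennreal (C * w x)"
    using w by (auto simp: A1_def)
  define a where "a = enn2real (avg Q w)"
  have a: "avg Q w = ennreal a" "0 < a"
    using avg_weight_pos[OF Q weight] avg_weight_less_top[OF Q weight]
    by (auto simp: a_def ennreal_enn2real_if less_top enn2real_positive_iff)
  have "AE x in ?M. a / (\<bar>C\<bar> + 1) \<le> w x"
    using C w_pos AE_space
  proof eventually_elim
    case (elim x)
    have "avg Q w \<le> maxQ Q w x"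
      unfolding maxQ_def by (rule SUP_upper) (use Q elim in \<open>auto simp: space_restrict_space\<close>)
    then have "ennreal a \<le> ennreal (C * w x)" using elim(1) a(1) by simp
    then have "a \<le> C * w x"
      using a(2) by (cases "0 \<le> C * w x") (auto simp: ennreal_le_iff ennreal_neg)
    also have "\<dots> \<le> (\<bar>C\<bar> + 1) * w x" using elim(2) by (intro mult_right_mono) auto
    finally show ?case by (simp add: divide_le_eq add_pos_nonneg mult.commute)
  qed
  moreover have "a / (\<bar>C\<bar> + 1) > 0" using a(2) by (simp add: add_pos_nonneg)
  ultimately show ?thesis using that by blast
qed

lemma Lpw_subset_Lp_of_A1:
  assumes Q: "is_cube Q" and w: "A1 Q w"
  shows "Lpw p w Q \<subseteq> Lp p Q"
proof
  fix f assume "f \<in> Lpw p w Q"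
  let ?M = "lebesgue_on Q"
  have [measurable]: "Q \<in> sets lebesgue" using sets_lebesgue_cube[OF Q] .
  have f[measurable]: "f \<in> borel_measurable ?M"
    and f_int: "(\<integral>\<^sup>+x. ennreal (\<bar>f x\<bar> powr p * w x) \<partial>?M) < \<infinity>"
    using \<open>f \<in> Lpw p w Q\<close> by (auto simp: Lpw_def nn_integral_restrict_space)
  have [measurable]: "w \<in> borel_measurable ?M" using w by (auto simp: A1_def weight_def)
  obtain c where c: "c > 0" "AE x in ?M. c \<le> w x" using A1_bounded_below[OF Q w] by blast
  have "AE x in ?M. ennreal (\<bar>f x\<bar> powr p * 1) \<le> ennreal (1 / c) * ennreal (\<bar>f x\<bar> powr p * w x)"
    using c(2)
  proof eventually_elim
    case (elim x)
    then have "\<bar>f x\<bar> powr p * c \<le> \<bar>f x\<bar> powr p * w x" by (intro mult_left_mono) auto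
    then have "\<bar>f x\<bar> powr p * 1 \<le> 1 / c * (\<bar>f x\<bar> powr p * w x)"
      using c(1) by (simp add: field_simps)
    then show ?case using c(1) elim by (simp add: ennreal_mult[symmetric] ennreal_leI)
  qed
  then have "(\<integral>\<^sup>+x. ennreal (\<bar>f x\<bar> powr p * 1) \<partial>?M)
      \<le> (\<integral>\<^sup>+x. ennreal (1 / c) * ennreal (\<bar>f x\<bar> powr p * w x) \<partial>?M)"
    by (rule nn_integral_mono_AE)
  also have "\<dots> = ennreal (1 / c) * (\<integral>\<^sup>+x. ennreal (\<bar>f x\<bar> powr p * w x) \<partial>?M)"
    by (rule nn_integral_cmult) measurable
  also have "\<dots> < \<infinity>" using f_int by (simp add: ennreal_mult_less_top)
  finally show "f \<in> Lp p Q" using f by (simp add: Lp_def Lpw_def nn_integral_restrict_space)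
qed

text \<open>Young's inequality \<open>X\<^bsup>1/q\<^esup> Y\<^bsup>1/q'\<^esup> \<le> X + Y\<close> for \<open>X = y\<^sup>p w\<close> and \<open>Y = w\<^bsup>1-q'\<^esup>\<close>.\<close>
lemma powr_divide_le_weighted_plus_dual:
  fixes y w q p :: real
  assumes q: "1 < q" and w: "0 < w" and y: "0 \<le> y"
  shows "y powr (p / q) \<le> y powr p * w + w powr (1 - q / (q - 1))"
proof -
  define X where "X = y powr p * w"
  define Y where "Y = w powr (1 - q / (q - 1))"
  have X: "0 \<le> X" and Y: "0 < Y" using w by (simp_all add: X_def Y_def)
  have "X powr (1 / q) = y powr (p / q) * w powr (1 / q)"
    using w y by (simp add: X_def powr_mult powr_powr)
  moreover have "Y powr (1 - 1 / q) = w powr (- 1 / q)"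
  proof -
    have "(1 - q / (q - 1)) * (1 - 1 / q) = - 1 / q" using q by (simp add: field_simps)
    then show ?thesis by (simp add: Y_def powr_powr)
  qed
  moreover have "w powr (1 / q) * w powr (- 1 / q) = 1"
    using w by (simp flip: powr_add)
  ultimately have eq: "y powr (p / q) = X powr (1 / q) * Y powr (1 - 1 / q)" by simp
  have "X powr (1 / q) * Y powr (1 - 1 / q) \<le> max X Y powr (1 / q) * max X Y powr (1 - 1 / q)"
    using X Y q by (intro mult_mono powr_mono2) auto
  also have "\<dots> = max X Y" using Y by (simp flip: powr_add)
  also have "\<dots> \<le> X + Y" using X Y by simp
  finally show ?thesis using eq by (simp add: X_def Y_def)
qed

lemma Lpw_subset_Lp_of_Aq:
  assumes Q: "is_cube Q" and q: "1 < q" and w: "Aq Q q w"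
  shows "Lpw p w Q \<subseteq> Lp (p / q) Q"
proof
  fix f assume "f \<in> Lpw p w Q"
  let ?M = "lebesgue_on Q"
  let ?\<sigma> = "\<lambda>x. w x powr (1 - q / (q - 1))"
  have [measurable]: "Q \<in> sets lebesgue" using sets_lebesgue_cube[OF Q] .
  have f[measurable]: "f \<in> borel_measurable ?M"
    and f_int: "(\<integral>\<^sup>+x. ennreal (\<bar>f x\<bar> powr p * w x) \<partial>?M) < \<infinity>"
    using \<open>f \<in> Lpw p w Q\<close> by (auto simp: Lpw_def nn_integral_restrict_space)
  have weight: "weight Q w" and [measurable]: "w \<in> borel_measurable ?M"
    and w_pos: "AE x in ?M. 0 < w x"
    using w by (auto simp: Aq_def weight_def)
  have "avg Q w * avg Q ?\<sigma> \<le> (SUP Q'\<in>{Q'. is_cube Q' \<and> Q' \<subseteq> Q}. avg Q' w * avg Q' ?\<sigma>)"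
    by (rule SUP_upper) (use Q in auto)
  also have "\<dots> < \<infinity>" using w by (simp add: Aq_def Let_def)
  finally have "avg Q ?\<sigma> < \<infinity>"
    using avg_weight_pos[OF Q weight] by (auto simp: ennreal_mult_less_top)
  then have \<sigma>_int: "(\<integral>\<^sup>+x. ennreal \<bar>?\<sigma> x\<bar> \<partial>?M) < \<infinity>"
    using emeasure_cube_less_top[OF Q]
    by (auto simp: avg_def nn_integral_restrict_space less_top[symmetric] ennreal_divide_eq_top_iff)
  have "AE x in ?M. ennreal (\<bar>f x\<bar> powr (p / q) * 1) \<le> ennreal (\<bar>f x\<bar> powr p * w x) + ennreal \<bar>?\<sigma> x\<bar>"
    using w_pos
  proof eventually_elim
    case (elim x)
    then have "\<bar>f x\<bar> powr (p / q) \<le> \<bar>f x\<bar> powr p * w x + \<bar>?\<sigma> x\<bar>"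
      using powr_divide_le_weighted_plus_dual[OF q elim, of "\<bar>f x\<bar>" p] by simp
    then show ?case using elim by (simp add: ennreal_leI flip: ennreal_plus)
  qed
  then have "(\<integral>\<^sup>+x. ennreal (\<bar>f x\<bar> powr (p / q) * 1) \<partial>?M)
      \<le> (\<integral>\<^sup>+x. ennreal (\<bar>f x\<bar> powr p * w x) + ennreal \<bar>?\<sigma> x\<bar> \<partial>?M)"
    by (rule nn_integral_mono_AE)
  also have "\<dots> = (\<integral>\<^sup>+x. ennreal (\<bar>f x\<bar> powr p * w x) \<partial>?M) + (\<integral>\<^sup>+x. ennreal \<bar>?\<sigma> x\<bar> \<partial>?M)"
    by (rule nn_integral_add) measurable
  also have "\<dots> < \<infinity>" using f_int \<sigma>_int by simp
  finally show "f \<in> Lp (p / q) Q" using f by (simp add: Lp_def Lpw_def nn_integral_restrict_space)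
qed

lemma Lpw_Ainf_subset_Lp:
  assumes Q: "is_cube Q" and p: "0 < p" and w: "Ainf Q w"
  shows "\<exists>s>0. Lpw p w Q \<subseteq> Lp s Q"
proof (cases "A1 Q w")
  case True
  then show ?thesis using Lpw_subset_Lp_of_A1[OF Q] p by blast
next
  case False
  then obtain q where "q > 1" "Aq Q q w" using w by (auto simp: Ainf_def)
  then show ?thesis using Lpw_subset_Lp_of_Aq[OF Q] p by (intro exI[of _ "p / q"]) auto
qed

theorem mainTheorem3:
  fixes Q :: "(real^'n) set" and p0 :: real
  assumes "is_cube Q" and "0 < p0"
  shows "(\<Union>r\<in>{0<..}. MA1 r Q) = (\<Union>p\<in>{0<..}. Lp p Q)
       \<and> (\<Union>p\<in>{0<..}. Lp p Q) = (\<Union>w\<in>{w. Ainf Q w}. Lpw p0 w Q)"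
proof (intro conjI equalityI subsetI)
  fix f
  show "f \<in> (\<Union>p\<in>{0<..}. Lp p Q)" if "f \<in> (\<Union>r\<in>{0<..}. MA1 r Q)"
    using that MA1_subset_Lp[OF assms(1)] by blast
  show "f \<in> (\<Union>r\<in>{0<..}. MA1 r Q)" if "f \<in> (\<Union>p\<in>{0<..}. Lp p Q)"
  proof -
    from that obtain p where "0 < p" "f \<in> Lp p Q" by blast
    then show ?thesis using Lp_subset_MA1[OF assms(1)] by (intro UN_I[of "p/2"]) auto
  qed
  show "f \<in> (\<Union>w\<in>{w. Ainf Q w}. Lpw p0 w Q)" if "f \<in> (\<Union>p\<in>{0<..}. Lp p Q)"
    using that Lp_subset_Lpw_Ainf[OF assms(1) _ assms(2)] by blast
  show "f \<in> (\<Union>p\<in>{0<..}. Lp p Q)" if "f \<in> (\<Union>w\<in>{w. Ainf Q w}. Lpw p0 w Q)"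
  proof -
    from that obtain w where "Ainf Q w" "f \<in> Lpw p0 w Q" by blast
    moreover from this(1) obtain s where "s > 0" "Lpw p0 w Q \<subseteq> Lp s Q"
      using Lpw_Ainf_subset_Lp[OF assms] by blast
    ultimately show ?thesis by blast
  qed
qed

end
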